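(* Let $(\mathbb{F}(t),\sigma)$ be a $\Pi\Sigma$-extension of $(\mathbb{F},\sigma)$, let $A_0,\dots,A_\ell\in\mathbb{F}[t]^{n\times n}$, $b\in\mathbb{F}[t]^n$, and let $A=A_\ell\sigma^\ell+\dots+A_1\sigma+A_0\in\mathbb{F}(t)[\sigma]^{n\times n}$ be such that the system $A(y)=b$ is fully regular. Let $P\in\mathrm{GL}_n(\mathbb{F}(t)[\sigma,\sigma^{-1}])$ be such that $PA=\tilde A_{\tilde\ell}\sigma^{\tilde\ell}+\dots+\tilde A_1\sigma+\tilde A_0$ with $\tilde A_0,\dots,\tilde A_{\tilde\ell}\in\mathbb{F}[t]^{n\times n}$, $P(b)\in\mathbb{F}[t]^n$ and $\det\tilde A_0\ne0$. Let $m\in\mathbb{F}[t]\setminus\{0\}$ be the common denominator of the entries of $A_\ell^{-1}$ and $p\in\mathbb{F}[t]\setminus\{0\}$ the common denominator of the entries of $\tilde A_0^{-1}$. Let $y=d^{-1}z\in\mathbb{F}(t)^n$ be a solution of $A(y)=b$ in reduced representation. Then $$\mathrm{disp}(\operatorname{ap}(d))\le \mathrm{disp}\big(\sigma^{-\ell}(\operatorname{ap}(m)),\operatorname{ap}(p)\big)=:D$$ and $$\operatorname{ap}(d)\;\Big|\;\gcd\Big(\prod_{j=0}^{D}\sigma^{-\ell-j}(\operatorname{ap}(m)),\ \prod_{j=0}^{D}\sigma^{j}(\operatorname{ap}(p))\Big).$$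
   Context: All fields contain $\mathbb{Q}$. A difference field $(\mathbb{F},\sigma)$ is a field with an automorphism $\sigma$; $\mathrm{const}\,\mathbb{F}=\{c:\sigma(c)=c\}$. A $\Pi\Sigma$-extension $(\mathbb{F}(t),\sigma)$ of $(\mathbb{F},\sigma)$: $\mathbb{F}(t)$ is a rational function field, $\sigma$ extends to an automorphism of $\mathbb{F}(t)$ with either $\sigma(t)=t+\beta$, $\beta\in\mathbb{F}\setminus\{0\}$ ($\Sigma$-monomial) or $\sigma(t)=\alpha t$, $\alpha\in\mathbb{F}\setminus\{0\}$ ($\Pi$-monomial), and $\mathrm{const}\,\mathbb{F}(t)=\mathrm{const}\,\mathbb{F}$. For $a,b\in\mathbb{F}[t]\setminus\{0\}$: $\mathrm{spread}(a,b)=\{k\ge0:\gcd(a,\sigma^k(b))\notin\mathbb{F}\}$, $\mathrm{disp}(a,b)=\max\mathrm{spread}(a,b)$ ($\max\emptyset=-\infty$, max of an infinite set $=\infty$), $\mathrm{disp}(a)=\mathrm{disp}(a,a)$; empty products equal $1$. $\mathrm{per}(a)=1$ if $t$ is a $\Sigma$-monomial, $\mathrm{per}(a)=t^\mu$ with $\mu$ maximal such that $t^\mu\mid a$ if $t$ is a $\Pi$-monomial; $\operatorname{ap}(a)=a/\mathrm{per}(a)$. A reduced representation $y=d^{-1}z$ has $d\in\mathbb{F}[t]\setminus\{0\}$, $z\in\mathbb{F}[t]^n$, $\gcd(z_1,\dots,z_n,d)=1$. Ore polynomials: $\mathbb{F}(t)[\sigma]$ is the ring of polynomials $\sum a_i\sigma^i$,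 $a_i\in\mathbb{F}(t)$, with usual addition and multiplication determined by $\sigma\cdot a=\sigma(a)\cdot\sigma$; $\mathbb{F}(t)[\sigma,\sigma^{-1}]$ is its localisation at the powers of $\sigma$ (Ore Laurent polynomials). An operator $L=\sum a_i\sigma^i$ acts on $\alpha\in\mathbb{F}(t)$ by $L(\alpha)=\sum a_i\sigma^i(\alpha)$; a matrix $L=(L_{ij})$ of operators acts on a vector $\alpha=(\alpha_j)$ by $L(\alpha)=(\sum_j L_{ij}(\alpha_j))_i$. A square operator matrix is unimodular if it has a two-sided inverse over the same ring; $\mathrm{GL}_n(\cdot)$ denotes unimodular matrices. A system $A(y)=b$ with $A=\sum_{i=0}^\ell A_i\sigma^i$, $A_i$ square $n\times n$, is head regular if $\det A_\ell\ne0$, tail regular if $\det A_0\ne0$, and fully regular if it is head regular and there exists $P\in\mathrm{GL}_n(\mathbb{F}(t)[\sigma,\sigma^{-1}])$ such that $PA\in\mathbb{F}(t)[\sigma]^{n\times n}$ and the system $(PA)(\tilde y)=P(b)$ is tail regular. *)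

theory Defs
  imports "HOL-Computational_Algebra.Computational_Algebra"
          "HOL-Computational_Algebra.Normalized_Fraction"
          "HOL-Library.Extended_Real"
          "Jordan_Normal_Form.Determinant"
begin

text \<open>The ground field F is the type 'a (a field of characteristic 0, so it contains Q).
  The rational function field F(t) is the fraction field of 'a poly.\<close>

type_synonym 'a ratfun = "'a poly fract"

definition polyK :: "'a::field_gcd poly \<Rightarrow> 'a ratfun" where
  "polyK p = Fract p 1"

definition tK :: "'a::field_gcd ratfun" where
  "tK = polyK [:0, 1:]"

definition inF :: "'a::field_gcd ratfun \<Rightarrow> bool" where
  "inF x \<longleftrightarrow> (\<exists>c. x = polyK [:c:])"

definition inFt :: "'a::field_gcd ratfun \<Rightarrow> bool" where
  "inFt x \<longleftrightarrow> (\<exists>p. x = polyK p)"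

definition sigma_pow :: "('a \<Rightarrow> 'a) \<Rightarrow> int \<Rightarrow> 'a \<Rightarrow> 'a" where
  "sigma_pow sg k = (if 0 \<le> k then sg ^^ (nat k) else (inv_into UNIV sg) ^^ (nat (- k)))"

definition PiSigma_ext :: "('a::{field_char_0,field_gcd} ratfun \<Rightarrow> 'a ratfun) \<Rightarrow> bool" where
  "PiSigma_ext sg \<longleftrightarrow>
     bij sg \<and> (\<forall>x y. sg (x + y) = sg x + sg y) \<and> (\<forall>x y. sg (x * y) = sg x * sg y) \<and> sg 1 = 1
     \<and> sg ` {x. inF x} = {x. inF x}
     \<and> ((\<exists>\<beta>. inF \<beta> \<and> \<beta> \<noteq> 0 \<and> sg tK = tK + \<beta>) \<or> (\<exists>\<alpha>. inF \<alpha> \<and> \<alpha> \<noteq> 0 \<and> sg tK = \<alpha> * tK))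
     \<and> (\<forall>x. sg x = x \<longrightarrow> inF x)"

definition is_Pi :: "('a::field_gcd ratfun \<Rightarrow> 'a ratfun) \<Rightarrow> bool" where
  "is_Pi sg \<longleftrightarrow> (\<exists>\<alpha>. inF \<alpha> \<and> \<alpha> \<noteq> 0 \<and> sg tK = \<alpha> * tK)"

text \<open>sigma^k applied to a polynomial (the result is again a polynomial in a Pi-Sigma-extension).\<close>
definition sigma_poly :: "('a::field_gcd ratfun \<Rightarrow> 'a ratfun) \<Rightarrow> int \<Rightarrow> 'a poly \<Rightarrow> 'a poly" where
  "sigma_poly sg k p = (THE q. polyK q = sigma_pow sg k (polyK p))"

definition spread :: "('a::field_gcd ratfun \<Rightarrow> 'a ratfun) \<Rightarrow> 'a poly \<Rightarrow> 'a poly \<Rightarrow> nat set" where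
  "spread sg a b = {k. degree (gcd a (sigma_poly sg (int k) b)) \<noteq> 0}"

text \<open>disp: max of spread, -infinity for the empty set, infinity for an infinite set.\<close>
definition disp :: "('a::field_gcd ratfun \<Rightarrow> 'a ratfun) \<Rightarrow> 'a poly \<Rightarrow> 'a poly \<Rightarrow> ereal" where
  "disp sg a b = Sup ((\<lambda>k. ereal (real k)) ` spread sg a b)"

definition per :: "('a::field_gcd ratfun \<Rightarrow> 'a ratfun) \<Rightarrow> 'a poly \<Rightarrow> 'a poly" where
  "per sg a = (if is_Pi sg then monom 1 (GREATEST \<mu>. monom 1 \<mu> dvd a) else 1)"

definition ap :: "('a::field_gcd ratfun \<Rightarrow> 'a ratfun) \<Rightarrow> 'a poly \<Rightarrow> 'a poly" where
  "ap sg a = a div per sg a"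

definition common_denom :: "'a::field_gcd ratfun mat \<Rightarrow> 'a poly" where
  "common_denom B = Lcm {snd (quot_of_fract (B $$ (i, j))) | i j. i < dim_row B \<and> j < dim_col B}"

text \<open>Matrices of Ore Laurent polynomials, represented as sum_k M_k sigma^k with
  M :: int => n x n matrix over F(t), of finite support.\<close>
type_synonym 'a opmat = "int \<Rightarrow> 'a ratfun mat"

definition is_opmat :: "nat \<Rightarrow> 'a::field_gcd opmat \<Rightarrow> bool" where
  "is_opmat n M \<longleftrightarrow> (\<forall>k. M k \<in> carrier_mat n n) \<and> finite {k. M k \<noteq> 0\<^sub>m n n}"

definition is_ore_opmat :: "nat \<Rightarrow> 'a::field_gcd opmat \<Rightarrow> bool" where
  "is_ore_opmat n M \<longleftrightarrow> is_opmat n M \<and> (\<forall>k<0. M k = 0\<^sub>m n n)"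

definition opmat_mult :: "('a::field_gcd ratfun \<Rightarrow> 'a ratfun) \<Rightarrow> nat \<Rightarrow> 'a opmat \<Rightarrow> 'a opmat \<Rightarrow> 'a opmat" where
  "opmat_mult sg n M N = (\<lambda>k. mat n n (\<lambda>(r, c).
      \<Sum>i\<in>{i. M i \<noteq> 0\<^sub>m n n}. (M i * map_mat (sigma_pow sg i) (N (k - i))) $$ (r, c)))"

definition opmat_one :: "nat \<Rightarrow> 'a::field_gcd opmat" where
  "opmat_one n = (\<lambda>k. if k = 0 then 1\<^sub>m n else 0\<^sub>m n n)"

definition unimodular :: "('a::field_gcd ratfun \<Rightarrow> 'a ratfun) \<Rightarrow> nat \<Rightarrow> 'a opmat \<Rightarrow> bool" where
  "unimodular sg n P \<longleftrightarrow> is_opmat n P \<and>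
     (\<exists>Q. is_opmat n Q \<and> opmat_mult sg n P Q = opmat_one n \<and> opmat_mult sg n Q P = opmat_one n)"

definition opmat_apply :: "('a::field_gcd ratfun \<Rightarrow> 'a ratfun) \<Rightarrow> nat \<Rightarrow> 'a opmat \<Rightarrow> 'a ratfun vec \<Rightarrow> 'a ratfun vec" where
  "opmat_apply sg n M v = vec n (\<lambda>r.
      \<Sum>k\<in>{k. M k \<noteq> 0\<^sub>m n n}. (M k *\<^sub>v map_vec (sigma_pow sg k) v) $ r)"

definition opmat_of_polys :: "nat \<Rightarrow> nat \<Rightarrow> (nat \<Rightarrow> 'a::field_gcd poly mat) \<Rightarrow> 'a opmat" where
  "opmat_of_polys n l A = (\<lambda>k. if 0 \<le> k \<and> k \<le> int l then map_mat polyK (A (nat k)) else 0\<^sub>m n n)"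

definition head_regular :: "nat \<Rightarrow> nat \<Rightarrow> 'a::field_gcd opmat \<Rightarrow> bool" where
  "head_regular n l M \<longleftrightarrow> det (M (int l)) \<noteq> 0"

definition tail_regular :: "nat \<Rightarrow> 'a::field_gcd opmat \<Rightarrow> bool" where
  "tail_regular n M \<longleftrightarrow> det (M 0) \<noteq> 0"

definition fully_regular :: "('a::field_gcd ratfun \<Rightarrow> 'a ratfun) \<Rightarrow> nat \<Rightarrow> nat \<Rightarrow> 'a opmat \<Rightarrow> bool" where
  "fully_regular sg n l M \<longleftrightarrow> head_regular n l M \<and>
     (\<exists>P. unimodular sg n P \<and> is_ore_opmat n (opmat_mult sg n P M)
          \<and> tail_regular n (opmat_mult sg n P M))"

end

theory Submission
  imports Defs
begin

text \<open>
  Fix a prime q dividing the aperiodic part of d and let e(k) be the multiplicity of \<sigma>^k(q)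
  in d.  Solving the system for its highest shift with the inverse of A_l shows that e(k) is at
  most the multiplicity of \<sigma>^(l+k)(q) in m plus the largest e(k+s), 1 \<le> s \<le> l.  Solving the
  transformed system P A for its lowest shift with the inverse of its trailing coefficient
  bounds e(k) by the multiplicity of \<sigma>^k(q) in p plus the largest e(k-s), 1 \<le> s \<le> l', where
  l' is the order of P A.  An aperiodic prime has only finitely many shifts dividing d, so e has
  a highest and a lowest nonzero position K+ \<ge> 0 \<ge> K-.  At K+ the first bound forces \<sigma>^K+(q)
  to divide \<sigma>^(-l)(ap m), at K- the second forces \<sigma>^K-(q) to divide ap p; hence K+ - K- lies
  in the spread and is at most D.  Unrolling both recursions from position 0 bounds e(0) by the
  multiplicity of q in \<Prod>j\<le>D. \<sigma>^(-l-j)(ap m) and in \<Prod>j\<le>D. \<sigma>^j(ap p).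
\<close>

subsection \<open>Polynomials inside the rational function field\<close>

lemma polyK_eq_to_fract: "polyK = to_fract"
  by (rule ext) (simp add: polyK_def to_fract_def)

lemma polyK_simps[simp]:
  "polyK (a + b) = polyK a + polyK b" "polyK (a * b) = polyK a * polyK b"
  "polyK 0 = 0" "polyK 1 = 1" "polyK (- a) = - polyK a" "polyK (a - b) = polyK a - polyK b"
  "polyK a = polyK b \<longleftrightarrow> a = b" "polyK a = 0 \<longleftrightarrow> a = 0"
  by (simp_all add: polyK_eq_to_fract)

lemma polyK_power[simp]: "polyK (a ^ k) = polyK a ^ k"
  by (induct k) auto

lemma polyK_pCons: "polyK (pCons a p) = polyK [:a:] + tK * polyK p"
proof -
  have "pCons a p = [:a:] + [:0, 1:] * p" by (simp add: pCons_eq_iff)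
  then show ?thesis unfolding tK_def by (metis polyK_simps(1,2))
qed

lemma polyK_divide_eq_divideD:
  assumes "y \<noteq> 0" "b \<noteq> 0" "polyK x / polyK y = polyK a / polyK b"
  shows "x * b = a * y"
proof -
  have "polyK x * polyK b = polyK a * polyK y" using assms by (simp add: frac_eq_eq)
  then have "polyK (x * b) = polyK (a * y)" by (simp only: polyK_simps(2))
  then show ?thesis by (simp only: polyK_simps(7))
qed

lemma inF_polyK_const[simp]: "inF (polyK [:c:])"
  by (auto simp: inF_def)

lemma inFt_polyK[simp]: "inFt (polyK p)"
  by (auto simp: inFt_def)

lemma inF_uminus: "inF x \<Longrightarrow> inF (- x)"
proof -
  assume "inF x"
  then obtain a where "x = polyK [:a:]" by (auto simp: inF_def)
  then have "- x = polyK [:- a:]" by (simp only: polyK_simps(5)[symmetric]) simp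
  then show ?thesis by simp
qed

lemma inF_inverse: "inF x \<Longrightarrow> inF (inverse x)"
proof -
  assume "inF x"
  then obtain c where c: "x = polyK [:c:]" by (auto simp: inF_def)
  show ?thesis
  proof (cases "c = 0")
    case True
    then show ?thesis using c by (auto simp: inF_def intro: exI[of _ 0])
  next
    case False
    have "polyK [:c:] * polyK [:inverse c:] = polyK [:c * inverse c:]"
      by (simp only: polyK_simps(2)[symmetric]) simp
    also have "\<dots> = 1" using False by (simp add: one_pCons[symmetric])
    finally have "inverse x = polyK [:inverse c:]" using c by (simp add: inverse_unique)
    then show ?thesis by simp
  qed
qed

lemma inFt_add: "inFt x \<Longrightarrow> inFt y \<Longrightarrow> inFt (x + y)"
  unfolding inFt_def by (metis polyK_simps(1))

lemma inFt_mult: "inFt x \<Longrightarrow> inFt y \<Longrightarrow> inFt (x * y)"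
  unfolding inFt_def by (metis polyK_simps(2))

lemma inF_imp_inFt: "inF x \<Longrightarrow> inFt x"
  unfolding inF_def inFt_def by auto

lemma inFt_tK: "inFt tK"
  by (simp add: tK_def)

lemma field_hom_inFt_polyK:
  assumes h: "field_hom h" and F: "\<And>x. inF x \<Longrightarrow> inF (h x)" and t: "inFt (h tK)"
  shows "inFt (h (polyK p))"
proof -
  interpret field_hom h by fact
  show ?thesis
  proof (induct p)
    case 0
    then show ?case by (metis inFt_polyK polyK_simps(3) hom_zero)
  next
    case (pCons a p)
    then show ?case
      unfolding polyK_pCons[of a p] hom_add hom_mult
      by (simp add: inFt_add inFt_mult F inF_imp_inFt t)
  qed
qed

lemma field_hom_comp: "field_hom f \<Longrightarrow> field_hom g \<Longrightarrow> field_hom (f \<circ> g)"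
proof -
  assume f: "field_hom f" and g: "field_hom g"
  interpret f: field_hom f by fact
  interpret g: field_hom g by fact
  show ?thesis by unfold_locales (auto simp: f.hom_add g.hom_add f.hom_mult g.hom_mult)
qed

subsection \<open>The automorphism on F(t) and on F[t]\<close>

locale PiSigma_extension =
  fixes sg :: "'a::{field_char_0,field_gcd} ratfun \<Rightarrow> 'a ratfun"
  assumes PiSigma: "PiSigma_ext sg"
begin

abbreviation isg where "isg \<equiv> inv_into UNIV sg"

lemma bij_sg: "bij sg"
  using PiSigma by (simp add: PiSigma_ext_def)

lemma isg_sg[simp]: "isg (sg x) = x"
  using bij_sg by (simp add: bij_def inv_into_f_f)

lemma sg_isg[simp]: "sg (isg x) = x"
  using bij_sg by (simp add: bij_def f_inv_into_f)

lemma sg_eq_iff: "sg x = sg y \<longleftrightarrow> x = y"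
  by (metis isg_sg)

lemma field_hom_sg: "field_hom sg"
proof -
  have a: "sg (x + y) = sg x + sg y" "sg (x * y) = sg x * sg y" "sg 1 = 1" for x y
    using PiSigma by (auto simp: PiSigma_ext_def)
  have "sg 0 + sg 0 = sg 0 + 0" using a(1)[of 0 0] by simp
  then have "sg 0 = 0" by (rule add_left_imp_eq)
  then show ?thesis by unfold_locales (auto simp: a)
qed

lemma field_hom_isg: "field_hom isg"
proof -
  interpret field_hom sg by (rule field_hom_sg)
  have "isg (x + y) = isg x + isg y" "isg (x * y) = isg x * isg y" "isg 1 = 1" "isg 0 = 0" for x y
    by (metis sg_eq_iff sg_isg hom_add hom_mult hom_one hom_zero)+
  then show ?thesis by unfold_locales auto
qed

lemma sigma_pow_succ: "sigma_pow sg (k + 1) x = sg (sigma_pow sg k x)"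
proof (cases "0 \<le> k")
  case True
  then have "nat (k + 1) = Suc (nat k)" by simp
  then show ?thesis using True by (simp add: sigma_pow_def)
next
  case False
  then have m: "nat (- k) = Suc (nat (- (k + 1)))" by simp
  show ?thesis
  proof (cases "k = -1")
    case True
    then show ?thesis by (simp add: sigma_pow_def)
  next
    case False
    with \<open>\<not> 0 \<le> k\<close> have "\<not> 0 \<le> k + 1" by simp
    then show ?thesis using \<open>\<not> 0 \<le> k\<close> m by (simp add: sigma_pow_def)
  qed
qed

lemma sigma_pow_pred: "sigma_pow sg (k - 1) x = isg (sigma_pow sg k x)"
  using sigma_pow_succ[of "k - 1" x] by simp

lemma sigma_pow_0[simp]: "sigma_pow sg 0 x = x"
  by (simp add: sigma_pow_def)

lemma sigma_pow_1: "sigma_pow sg 1 x = sg x"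
  using sigma_pow_succ[of 0 x] by simp

lemma sigma_pow_add: "sigma_pow sg (j + k) x = sigma_pow sg j (sigma_pow sg k x)"
proof (induct j rule: int_induct[where k = 0])
  case base
  then show ?case by simp
next
  case (step1 i)
  then show ?case by (metis add.commute add.left_commute sigma_pow_succ)
next
  case (step2 i)
  then show ?case by (metis diff_add_eq sigma_pow_pred)
qed

lemma field_hom_sigma_pow: "field_hom (sigma_pow sg k)"
proof (induct k rule: int_induct[where k = 0])
  case base
  have "field_hom (id :: 'a ratfun \<Rightarrow> 'a ratfun)" by unfold_locales auto
  then show ?case by (simp add: id_def)
next
  case (step1 i)
  have "sigma_pow sg (i + 1) = sg \<circ> sigma_pow sg i" by (simp add: fun_eq_iff sigma_pow_succ)
  then show ?case using field_hom_comp[OF field_hom_sg step1(2)] by (simp only:)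
next
  case (step2 i)
  have "sigma_pow sg (i - 1) = isg \<circ> sigma_pow sg i" by (simp add: fun_eq_iff sigma_pow_pred)
  then show ?case using field_hom_comp[OF field_hom_isg step2(2)] by (simp only:)
qed

lemma sigma_pow_hom:
  "sigma_pow sg k (x * y) = sigma_pow sg k x * sigma_pow sg k y"
  "sigma_pow sg k (x + y) = sigma_pow sg k x + sigma_pow sg k y"
  "sigma_pow sg k 0 = 0" "sigma_pow sg k 1 = 1"
  "sigma_pow sg k (sum f S) = (\<Sum>x\<in>S. sigma_pow sg k (f x))"
  "sigma_pow sg k (x - y) = sigma_pow sg k x - sigma_pow sg k y"
  "sigma_pow sg k (x / y) = sigma_pow sg k x / sigma_pow sg k y"
  "sigma_pow sg k (- x) = - sigma_pow sg k x"
proof -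
  interpret field_hom "sigma_pow sg k" by (rule field_hom_sigma_pow)
  show "sigma_pow sg k (x * y) = sigma_pow sg k x * sigma_pow sg k y"
    "sigma_pow sg k (x + y) = sigma_pow sg k x + sigma_pow sg k y"
    "sigma_pow sg k 0 = 0" "sigma_pow sg k 1 = 1"
    "sigma_pow sg k (sum f S) = (\<Sum>x\<in>S. sigma_pow sg k (f x))"
    "sigma_pow sg k (x - y) = sigma_pow sg k x - sigma_pow sg k y"
    "sigma_pow sg k (x / y) = sigma_pow sg k x / sigma_pow sg k y"
    "sigma_pow sg k (- x) = - sigma_pow sg k x"
    by (simp_all add: hom_mult hom_add hom_sum hom_minus hom_div hom_uminus)
qed

lemma inF_sg: "inF x \<Longrightarrow> inF (sg x)"
  using PiSigma unfolding PiSigma_ext_def by blast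

lemma inF_isg: "inF x \<Longrightarrow> inF (isg x)"
proof -
  assume "inF x"
  then have "x \<in> sg ` {x. inF x}" using PiSigma unfolding PiSigma_ext_def by auto
  then obtain y where "inF y" "x = sg y" by auto
  then show ?thesis by simp
qed

lemma sg_tK_cases:
  obtains \<beta> where "inF \<beta>" "\<beta> \<noteq> 0" "sg tK = tK + \<beta>"
  | \<alpha> where "inF \<alpha>" "\<alpha> \<noteq> 0" "sg tK = \<alpha> * tK"
  using PiSigma unfolding PiSigma_ext_def by blast

lemma inFt_sg_tK: "inFt (sg tK)"
  by (rule sg_tK_cases) (auto intro: inFt_add inFt_mult inF_imp_inFt inFt_tK)

lemma inFt_isg_tK: "inFt (isg tK)"
proof -
  interpret field_hom isg by (rule field_hom_isg)
  show ?thesis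
  proof (rule sg_tK_cases)
    fix \<beta> assume b: "inF \<beta>" "sg tK = tK + \<beta>"
    then have "tK = isg tK + isg \<beta>" by (metis isg_sg hom_add)
    then have "isg tK = tK + (- isg \<beta>)" by (simp add: algebra_simps)
    then show ?thesis using b by (metis inFt_add inF_imp_inFt inFt_tK inF_isg inF_uminus)
  next
    fix \<alpha> assume a: "inF \<alpha>" "\<alpha> \<noteq> 0" "sg tK = \<alpha> * tK"
    then have "tK = isg \<alpha> * isg tK" by (metis isg_sg hom_mult)
    moreover have "isg \<alpha> \<noteq> 0" using a(2) by (metis hom_zero sg_isg)
    ultimately have "isg tK = inverse (isg \<alpha>) * tK" by (simp add: field_simps)
    then show ?thesis using a by (metis inFt_mult inF_imp_inFt inFt_tK inF_isg inF_inverse)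
  qed
qed

lemma inF_sigma_pow: "inF x \<Longrightarrow> inF (sigma_pow sg k x)"
proof (induct k rule: int_induct[where k = 0])
  case base
  then show ?case by simp
next
  case (step1 i)
  then show ?case by (simp add: sigma_pow_succ inF_sg)
next
  case (step2 i)
  then show ?case by (simp add: sigma_pow_pred inF_isg)
qed

lemma inFt_sigma_pow_polyK: "inFt (sigma_pow sg k (polyK p))"
proof (induct k arbitrary: p rule: int_induct[where k = 0])
  case base
  then show ?case by simp
next
  case (step1 i)
  then obtain q where "sigma_pow sg i (polyK p) = polyK q" by (auto simp: inFt_def)
  then show ?case
    using field_hom_inFt_polyK[OF field_hom_sg inF_sg inFt_sg_tK] by (simp add: sigma_pow_succ)
next
  case (step2 i)
  then obtain q where "sigma_pow sg i (polyK p) = polyK q" by (auto simp: inFt_def)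
  then show ?case
    using field_hom_inFt_polyK[OF field_hom_isg inF_isg inFt_isg_tK] by (simp add: sigma_pow_pred)
qed

abbreviation sp where "sp \<equiv> sigma_poly sg"

lemma polyK_sigma_poly: "polyK (sp k p) = sigma_pow sg k (polyK p)"
proof -
  obtain q where q: "sigma_pow sg k (polyK p) = polyK q"
    using inFt_sigma_pow_polyK[of k p] by (auto simp: inFt_def)
  have "sp k p = q" unfolding sigma_poly_def q by (rule the_equality) auto
  then show ?thesis using q by simp
qed

lemma sigma_poly_eqI: "sigma_pow sg k (polyK p) = polyK q \<Longrightarrow> sp k p = q"
  using polyK_sigma_poly by (metis polyK_simps(7))

lemma idom_hom_sigma_poly: "idom_hom (sp k)"
proof -
  interpret field_hom "sigma_pow sg k" by (rule field_hom_sigma_pow)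
  show ?thesis
    by unfold_locales (auto intro!: sigma_poly_eqI simp: polyK_sigma_poly hom_add hom_mult)
qed

lemma sigma_poly_sigma_poly: "sp j (sp k p) = sp (j + k) p"
  by (intro sigma_poly_eqI) (simp add: polyK_sigma_poly sigma_pow_add)

lemma sigma_poly_0[simp]: "sp 0 p = p"
  by (intro sigma_poly_eqI) simp

lemma sigma_poly_inverse[simp]: "sp (- k) (sp k p) = p" "sp k (sp (- k) p) = p"
  by (simp_all add: sigma_poly_sigma_poly)

lemma sigma_poly_eq_iff: "sp k p = sp k q \<longleftrightarrow> p = q"
  by (metis sigma_poly_inverse(1))

lemma sigma_poly_hom:
  "sp k (a * b) = sp k a * sp k b" "sp k (a + b) = sp k a + sp k b" "sp k 1 = 1" "sp k 0 = 0"
  "sp k (a ^ i) = sp k a ^ i"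
proof -
  interpret idom_hom "sp k" by (rule idom_hom_sigma_poly)
  show "sp k (a * b) = sp k a * sp k b" "sp k (a + b) = sp k a + sp k b" "sp k 1 = 1"
    "sp k 0 = 0" "sp k (a ^ i) = sp k a ^ i"
    by (simp_all add: hom_mult hom_add hom_power)
qed

lemma sigma_poly_prod: "sp k (prod f S) = (\<Prod>x\<in>S. sp k (f x))"
proof -
  interpret idom_hom "sp k" by (rule idom_hom_sigma_poly)
  show ?thesis by (rule hom_prod)
qed

lemma sigma_poly_eq_0_iff[simp]: "sp k p = 0 \<longleftrightarrow> p = 0"
  by (metis sigma_poly_eq_iff sigma_poly_hom(4))

lemma sigma_poly_dvd: "a dvd b \<Longrightarrow> sp k a dvd sp k b"
proof -
  interpret idom_hom "sp k" by (rule idom_hom_sigma_poly)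
  show "a dvd b \<Longrightarrow> sp k a dvd sp k b" by (rule hom_dvd)
qed

lemma sigma_poly_dvd_iff: "sp k a dvd sp k b \<longleftrightarrow> a dvd b"
  by (metis sigma_poly_dvd sigma_poly_inverse(1))

lemma sigma_poly_dvd_shift_iff: "sp j a dvd sp k b \<longleftrightarrow> a dvd sp (k - j) b"
proof -
  have "sp k b = sp j (sp (k - j) b)" by (simp add: sigma_poly_sigma_poly)
  then show ?thesis by (simp add: sigma_poly_dvd_iff)
qed

lemma is_unit_sigma_poly_iff: "is_unit (sp k a) \<longleftrightarrow> is_unit a"
  by (metis sigma_poly_dvd_iff sigma_poly_hom(3))

lemma prime_elem_sigma_poly: "prime_elem p \<Longrightarrow> prime_elem (sp k p)"
proof -
  assume p: "prime_elem p"
  have "sp k p dvd a \<or> sp k p dvd b" if "sp k p dvd a * b" for a b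
  proof -
    have "sp k p dvd sp k (sp (- k) a * sp (- k) b)" using that by (simp add: sigma_poly_hom)
    then have "p dvd sp (- k) a * sp (- k) b" by (simp add: sigma_poly_dvd_iff)
    then have "p dvd sp (- k) a \<or> p dvd sp (- k) b" using p by (simp add: prime_elem_def)
    then show ?thesis by (metis sigma_poly_dvd_iff sigma_poly_inverse(2))
  qed
  then show ?thesis using p unfolding prime_elem_def by (auto simp: is_unit_sigma_poly_iff)
qed

lemma multiplicity_sigma_poly: "multiplicity (sp k g) (sp k a) = multiplicity g a"
proof -
  have "{n. sp k g ^ n dvd sp k a} = {n. g ^ n dvd a}"
    by (auto simp: sigma_poly_hom(5)[symmetric] sigma_poly_dvd_iff)
  then show ?thesis by (simp add: multiplicity_def)
qed

end

subsection \<open>Aperiodic primes\<close>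

lemma prime_elem_dvd_prime_elem:
  fixes p q :: "'a::{idom,algebraic_semidom}"
  assumes p: "prime_elem p" and q: "prime_elem q" and d: "p dvd q"
  shows "q dvd p"
proof -
  obtain r where r: "q = p * r" using d by (auto elim: dvdE)
  have "q dvd p * r" unfolding r[symmetric] by simp
  then have "q dvd p \<or> q dvd r" using prime_elem_dvd_mult_iff[OF q] by blast
  then show ?thesis
  proof
    assume "q dvd r"
    then obtain s where "r = q * s" by (auto elim: dvdE)
    with r have "q * 1 = q * (p * s)" by (simp add: algebra_simps)
    moreover have "q \<noteq> 0" using q by auto
    ultimately have "p * s = 1" using mult_left_cancel[of q "p * s" 1] by simp
    then have "is_unit p" by (metis dvd_triv_left)
    then show ?thesis using p by (simp add: prime_elem_def)
  qed simp
qed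

lemma monom_if_t_pderiv_eq_const_mult:
  fixes u :: "'a::field_char_0 poly"
  assumes e: "[:0, 1:] * pderiv u = [:e:] * u" and unz: "u \<noteq> 0"
  shows "u = monom (coeff u (degree u)) (degree u)"
proof -
  have c: "of_nat i * coeff u i = e * coeff u i" for i
  proof -
    have "coeff ([:0, 1:] * pderiv u) i = of_nat i * coeff u i"
      by (cases i) (simp_all add: coeff_pderiv)
    moreover have "coeff ([:0, 1:] * pderiv u) i = e * coeff u i" unfolding e by simp
    ultimately show ?thesis by simp
  qed
  let ?N = "degree u"
  have eN: "e = of_nat ?N" using c[of ?N] unz by simp
  have "coeff u i = 0" if "i \<noteq> ?N" for i
  proof (rule ccontr)
    assume "coeff u i \<noteq> 0"
    then have "(of_nat i :: 'a) = of_nat ?N" using c[of i] eN by simp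
    then show False using that by simp
  qed
  then show ?thesis by (intro poly_eqI) (auto simp: coeff_monom)
qed

context PiSigma_extension
begin

abbreviation tt :: "'a poly" where "tt \<equiv> [:0, 1:]"

text \<open>In a \<Pi>-extension t itself is \<sigma>-periodic up to units; every other prime is aperiodic.\<close>
definition aperiodic :: "'a poly \<Rightarrow> bool" where
  "aperiodic g \<longleftrightarrow> \<not> (is_Pi sg \<and> g dvd tt)"

lemma sigma_poly_const: "\<exists>c'. sp k [:c:] = [:c':]"
proof -
  have "inF (sigma_pow sg k (polyK [:c:]))" by (rule inF_sigma_pow) simp
  then obtain c' where "sigma_pow sg k (polyK [:c:]) = polyK [:c':]" by (auto simp: inF_def)
  then show ?thesis by (metis sigma_poly_eqI)
qed

definition sigmaF :: "'a \<Rightarrow> 'a" where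
  "sigmaF c = coeff (sp 1 [:c:]) 0"

lemma sigma_poly_1_const: "sp 1 [:c:] = [:sigmaF c:]"
  using sigma_poly_const[of 1 c] unfolding sigmaF_def by auto

lemma field_hom_sigmaF: "field_hom sigmaF"
proof -
  have add: "sigmaF (a + b) = sigmaF a + sigmaF b" for a b
  proof -
    have "[:sigmaF (a + b):] = sp 1 ([:a:] + [:b:])" by (simp add: sigma_poly_1_const)
    also have "\<dots> = [:sigmaF a + sigmaF b:]" by (simp only: sigma_poly_hom sigma_poly_1_const) simp
    finally show ?thesis by simp
  qed
  have mult: "sigmaF (a * b) = sigmaF a * sigmaF b" for a b
  proof -
    have "[:a:] * [:b:] = [:a * b:]" by simp
    then have "[:sigmaF (a * b):] = sp 1 ([:a:] * [:b:])" by (simp only: sigma_poly_1_const)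
    also have "\<dots> = [:sigmaF a * sigmaF b:]" by (simp only: sigma_poly_hom sigma_poly_1_const) simp
    finally show ?thesis by simp
  qed
  have "sp 1 [:1:] = [:1:]" using sigma_poly_hom(3)[of 1] by (simp only: one_pCons)
  then have one: "sigmaF 1 = 1" using sigma_poly_1_const[of 1] by simp
  have zero: "sigmaF 0 = 0"
    using sigma_poly_1_const[of 0] sigma_poly_hom(4)[of 1] by (metis pCons_0_0 pCons_eq_iff)
  show ?thesis by unfold_locales (auto simp: add mult one zero)
qed

lemma sigma_poly_1_pcompose: "sp 1 u = pcompose (map_poly sigmaF u) (sp 1 tt)"
proof (induct u)
  case 0
  then show ?case by (simp add: sigma_poly_hom)
next
  case (pCons a p)
  interpret field_hom sigmaF by (rule field_hom_sigmaF)
  have "pCons a p = [:a:] + tt * p" by (simp add: pCons_eq_iff)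
  then have "sp 1 (pCons a p) = [:sigmaF a:] + sp 1 tt * sp 1 p"
    by (simp only: sigma_poly_hom sigma_poly_1_const)
  then show ?case using pCons by (simp add: map_poly_pCons pcompose_pCons)
qed

lemma pderiv_map_sigmaF: "pderiv (map_poly sigmaF u) = map_poly sigmaF (pderiv u)"
proof -
  interpret field_hom sigmaF by (rule field_hom_sigmaF)
  show ?thesis
    by (rule poly_eqI) (simp add: coeff_pderiv coeff_map_poly hom_mult hom_of_nat del: of_nat_Suc)
qed

lemma sigma_poly_t_Sigma: "\<not> is_Pi sg \<Longrightarrow> \<exists>b0. sp 1 tt = [:b0, 1:]"
proof (rule sg_tK_cases)
  fix \<beta> assume "inF \<beta>" "sg tK = tK + \<beta>"
  then obtain b0 where "sigma_pow sg 1 (polyK tt) = polyK tt + polyK [:b0:]"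
    by (auto simp: inF_def sigma_pow_1 tK_def)
  then have "sigma_pow sg 1 (polyK tt) = polyK (tt + [:b0:])" by (simp only: polyK_simps(1))
  then have "sp 1 tt = tt + [:b0:]" by (rule sigma_poly_eqI)
  then show ?thesis by auto
qed (auto simp: is_Pi_def)

lemma sigma_poly_t_Pi: "is_Pi sg \<Longrightarrow> \<exists>a0. a0 \<noteq> 0 \<and> sp 1 tt = [:0, a0:]"
proof -
  assume "is_Pi sg"
  then obtain a0 where a0: "a0 \<noteq> 0" "sg tK = polyK [:a0:] * tK" by (auto simp: is_Pi_def inF_def)
  then have "sigma_pow sg 1 (polyK tt) = polyK [:a0:] * polyK tt" by (simp add: sigma_pow_1 tK_def)
  then have "sigma_pow sg 1 (polyK tt) = polyK ([:a0:] * tt)" by (simp only: polyK_simps(2))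
  then have "sp 1 tt = [:a0:] * tt" by (rule sigma_poly_eqI)
  then show ?thesis using a0 by auto
qed

lemma sigma_poly_t_associated: "is_Pi sg \<Longrightarrow> sp k tt dvd tt \<and> tt dvd sp k tt"
proof -
  assume "is_Pi sg"
  then obtain a0 where a0: "a0 \<noteq> 0" "sp 1 tt = [:0, a0:]" using sigma_poly_t_Pi by blast
  have "[:0, a0:] = [:a0:] * tt" "tt = [:inverse a0:] * [:0, a0:]" using a0(1) by simp_all
  then have one: "sp 1 tt dvd tt \<and> tt dvd sp 1 tt" unfolding a0(2) by (metis dvd_triv_right)
  then have minus_one: "sp (- 1) tt dvd tt \<and> tt dvd sp (- 1) tt"
    using sigma_poly_dvd[of "sp 1 tt" tt "- 1"] sigma_poly_dvd[of tt "sp 1 tt" "- 1"] by simp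
  show ?thesis
  proof (induct k rule: int_induct[where k = 0])
    case base
    then show ?case by simp
  next
    case (step1 i)
    then have "sp 1 (sp i tt) dvd sp 1 tt" "sp 1 tt dvd sp 1 (sp i tt)"
      by (auto intro: sigma_poly_dvd)
    then show ?case using one by (auto simp: sigma_poly_sigma_poly add.commute intro: dvd_trans)
  next
    case (step2 i)
    then have "sp (- 1) (sp i tt) dvd sp (- 1) tt" "sp (- 1) tt dvd sp (- 1) (sp i tt)"
      by (auto intro: sigma_poly_dvd)
    then show ?case using minus_one by (auto simp: sigma_poly_sigma_poly intro: dvd_trans)
  qed
qed

lemma aperiodic_sigma_poly: "aperiodic g \<Longrightarrow> aperiodic (sp k g)"
  unfolding aperiodic_def
  by (metis dvd_trans sigma_poly_dvd_shift_iff sigma_poly_0 sigma_poly_t_associated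
      diff_0 add.right_neutral)

lemma sg_divide_polyK: "sg (polyK a / polyK b) = polyK (sp 1 a) / polyK (sp 1 b)"
  by (simp add: sigma_pow_1[symmetric] sigma_pow_hom polyK_sigma_poly)

text \<open>Constants are the only \<sigma>-invariant rational functions.\<close>
lemma same_factor_imp_const_multiple:
  assumes "sp 1 a = a * h" "sp 1 b = b * h" "h \<noteq> 0" "b \<noteq> 0"
  shows "\<exists>e. a = [:e:] * b"
proof -
  let ?x = "polyK a / polyK b"
  have "sg ?x = ?x" using assms by (simp add: sg_divide_polyK)
  then have "inF ?x" using PiSigma by (simp add: PiSigma_ext_def)
  then obtain e where "?x = polyK [:e:]" by (auto simp: inF_def)
  then have "polyK a = polyK b * polyK [:e:]" using assms(4) by (simp add: field_simps)
  then have "polyK a = polyK (b * [:e:])" by (simp only: polyK_simps(2))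
  then show ?thesis by (metis polyK_simps(7) mult.commute)
qed

text \<open>
  If \<sigma> u = h u with h constant, the same holds for the derivative u' (\<Sigma>-case) or for t u'
  (\<Pi>-case); comparing degrees, resp. coefficients, forces u to be a monomial in a \<Pi>-extension.
\<close>
lemma sigma_eigenpoly_is_monomial:
  assumes u: "degree u > 0" and h: "sp 1 u = u * [:h0:]" "h0 \<noteq> 0"
  shows "is_Pi sg \<and> u = monom (coeff u (degree u)) (degree u)"
proof -
  have unz: "u \<noteq> 0" using u by auto
  have hnz: "[:h0:] \<noteq> 0" using h by simp
  show ?thesis
  proof (cases "is_Pi sg")
    case False
    then obtain b0 where s: "sp 1 tt = [:b0, 1:]" using sigma_poly_t_Sigma by blast
    have "sp 1 (pderiv u) = pderiv (sp 1 u)"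
      by (simp add: sigma_poly_1_pcompose[of "pderiv u"] sigma_poly_1_pcompose[of u]
          pderiv_pcompose pderiv_map_sigmaF s pderiv_pCons)
    also have "\<dots> = pderiv u * [:h0:]" by (simp add: h pderiv_mult pderiv_pCons pderiv_smult)
    finally obtain e where e: "pderiv u = [:e:] * u"
      using same_factor_imp_const_multiple[OF _ h(1) hnz unz] by blast
    show ?thesis
    proof (cases "e = 0")
      case True
      then show ?thesis using u e by (simp add: pderiv_eq_0_iff)
    next
      case False
      then have "degree (pderiv u) = degree u" using e by (simp add: degree_mult_eq)
      then show ?thesis using u by (simp add: degree_pderiv)
    qed
  next
    case pi: True
    then obtain a0 where s: "sp 1 tt = [:0, a0:]" using sigma_poly_t_Pi by blast
    have "sp 1 (tt * pderiv u) = [:0, a0:] * pcompose (map_poly sigmaF (pderiv u)) [:0, a0:]"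
      by (simp only: sigma_poly_hom sigma_poly_1_pcompose[of "pderiv u"] s)
    also have "\<dots> = tt * pderiv (sp 1 u)"
      by (simp add: sigma_poly_1_pcompose[of u] s pderiv_pcompose pderiv_map_sigmaF pderiv_pCons)
    also have "\<dots> = (tt * pderiv u) * [:h0:]"
      by (simp add: h pderiv_mult pderiv_pCons pderiv_smult)
    finally obtain e where e: "tt * pderiv u = [:e:] * u"
      using same_factor_imp_const_multiple[OF _ h(1) hnz unz] by blast
    then show ?thesis using pi monom_if_t_pderiv_eq_const_mult[OF _ unz] by blast
  qed
qed

text \<open>
  If f divides \<sigma>^k f, then \<sigma>^k f = h f with h a constant, so u = f \<sigma>(f) \<dots> \<sigma>^(k-1)(f)
  satisfies \<sigma> u = h u and is a monomial; then f divides a power of t.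
\<close>
lemma aperiodic_dvd_shift_pos:
  assumes f: "prime_elem f" "aperiodic f" and k: "k > 0" and d: "f dvd sp (int k) f"
  shows False
proof -
  have fnz: "f \<noteq> 0" using f(1) by auto
  have "sp (int k) f dvd f"
    using prime_elem_dvd_prime_elem[OF f(1) prime_elem_sigma_poly[OF f(1)] d] .
  then obtain r where r: "f = sp (int k) f * r" by (auto elim: dvdE)
  obtain h where hf: "sp (int k) f = f * h" using d by (auto elim: dvdE)
  have "f * 1 = f * (h * r)" using hf r by (simp add: algebra_simps)
  then have "h * r = 1" using fnz by simp
  then have "is_unit h" by (metis dvd_triv_left)
  then obtain h0 where "h = [:h0:]" "is_unit h0" by (auto simp: is_unit_poly_iff)
  then have h0: "h = [:h0:]" "h0 \<noteq> 0" by auto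
  define u where "u = (\<Prod>i<k. sp (int i) f)"
  have "sp 1 u * f = sp (int 0) f * (\<Prod>i<k. sp (int (Suc i)) f)"
    by (simp add: u_def sigma_poly_prod sigma_poly_sigma_poly mult.commute)
  also have "\<dots> = (\<Prod>i<Suc k. sp (int i) f)" by (rule prod.lessThan_Suc_shift[symmetric])
  also have "\<dots> = u * sp (int k) f" unfolding u_def by (rule prod.lessThan_Suc)
  finally have "sp 1 u * f = (u * h) * f" using hf by (simp add: algebra_simps)
  then have "sp 1 u = u * h" using mult_right_cancel[of f "sp 1 u" "u * h"] fnz by blast
  then have su: "sp 1 u = u * [:h0:]" using h0 by simp
  have "sp (int 0) f dvd u" unfolding u_def using k by (intro dvd_prodI) auto
  then have fu: "f dvd u" by simp
  have unz: "u \<noteq> 0" unfolding u_def using fnz by (auto simp: prod_zero_iff)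
  have "\<not> is_unit u" using fu f(1) by (metis dvd_trans prime_elem_def)
  then have "degree u > 0" using unz by (metis gr0I is_unit_iff_degree)
  from sigma_eigenpoly_is_monomial[OF this su h0(2)]
  have pi: "is_Pi sg" and "u = monom (coeff u (degree u)) (degree u)" by auto
  then have "u = Polynomial.smult (coeff u (degree u)) (tt ^ degree u)" by (metis monom_altdef)
  then have "f dvd tt ^ degree u" using fu unz by (metis dvd_smult_cancel leading_coeff_0_iff)
  then have "f dvd tt" using f(1) prime_elem_dvd_power by blast
  then show False using f(2) pi by (simp add: aperiodic_def)
qed

lemma aperiodic_dvd_shift_imp_0:
  assumes f: "prime_elem f" "aperiodic f" and d: "f dvd sp k f"
  shows "k = 0"
proof (rule ccontr)
  assume k: "k \<noteq> 0"
  have "sp k f dvd f"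
    using prime_elem_dvd_prime_elem[OF f(1) prime_elem_sigma_poly[OF f(1)] d] .
  then have "f dvd sp (- k) f" by (simp add: sigma_poly_dvd_shift_iff[of k f 0, simplified])
  then show False
    using aperiodic_dvd_shift_pos[OF f, of "nat k"] aperiodic_dvd_shift_pos[OF f, of "nat (- k)"] d k
    by (cases "k > 0") simp_all
qed

lemma Greatest_monom_dvd: "(a::'b::field poly) \<noteq> 0 \<Longrightarrow> (GREATEST \<mu>. monom 1 \<mu> dvd a) = order 0 a"
  by (rule Greatest_equality) (simp_all add: monom_1_dvd_iff)

lemma per_Pi: "is_Pi sg \<Longrightarrow> a \<noteq> 0 \<Longrightarrow> per sg a = tt ^ order 0 a"
  unfolding per_def using Greatest_monom_dvd[of a] by (simp add: monom_altdef)

lemma per_mult_ap: "a \<noteq> 0 \<Longrightarrow> a = per sg a * ap sg a"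
proof -
  assume a: "a \<noteq> 0"
  have "per sg a dvd a"
  proof (cases "is_Pi sg")
    case True
    have "monom 1 (order 0 a) dvd a" using a by (simp add: monom_1_dvd_iff)
    then show ?thesis using True a by (simp add: per_Pi monom_altdef)
  qed (simp add: per_def)
  then show ?thesis by (simp add: ap_def)
qed

lemma ap_nonzero: "a \<noteq> 0 \<Longrightarrow> ap sg a \<noteq> 0"
  using per_mult_ap by force

lemma ap_dvd: "a \<noteq> 0 \<Longrightarrow> ap sg a dvd a"
  by (metis per_mult_ap dvd_triv_right)

lemma t_not_dvd_ap: "is_Pi sg \<Longrightarrow> a \<noteq> 0 \<Longrightarrow> \<not> tt dvd ap sg a"
proof
  assume pi: "is_Pi sg" and a: "a \<noteq> 0" and "tt dvd ap sg a"
  then have "tt ^ order 0 a * tt dvd per sg a * ap sg a"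
    unfolding per_Pi[OF pi a] by (intro mult_dvd_mono) simp_all
  then have "monom 1 (Suc (order 0 a)) dvd a"
    using per_mult_ap[OF a] by (simp add: monom_altdef power_Suc2)
  then show False using a by (simp add: monom_1_dvd_iff)
qed

lemma aperiodic_if_dvd_ap:
  assumes "prime_elem q" "q dvd ap sg a" "a \<noteq> 0"
  shows "aperiodic q"
  unfolding aperiodic_def
proof
  assume a: "is_Pi sg \<and> q dvd tt"
  then have "tt dvd q" using prime_elem_dvd_prime_elem[OF assms(1) prime_elem_linear_field_poly] by simp
  then show False using t_not_dvd_ap[OF _ assms(3)] a assms(2) dvd_trans by blast
qed

lemma multiplicity_ap:
  assumes g: "prime_elem g" "aperiodic g" and a: "a \<noteq> 0"
  shows "multiplicity g (ap sg a) = multiplicity g a"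
proof (cases "is_Pi sg")
  case True
  have "\<not> g dvd tt" using g True by (simp add: aperiodic_def)
  then have "multiplicity g (tt ^ order 0 a) = 0"
    using g by (simp add: prime_elem_multiplicity_power_distrib not_dvd_imp_multiplicity_0)
  moreover have "multiplicity g a = multiplicity g (tt ^ order 0 a) + multiplicity g (ap sg a)"
    using per_mult_ap[OF a] per_Pi[OF True a] g a ap_nonzero
    by (metis prime_elem_multiplicity_mult_distrib power_not_zero pCons_eq_0_iff one_neq_zero)
  ultimately show ?thesis by simp
qed (simp add: ap_def per_def)

lemma multiplicity_shift_ap:
  assumes g: "prime_elem g" "aperiodic g" and a: "a \<noteq> 0"
  shows "multiplicity (sp k g) a = multiplicity (sp j g) (sp (j - k) (ap sg a))"
proof -
  have "multiplicity (sp k g) a = multiplicity (sp k g) (ap sg a)"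
    using multiplicity_ap[OF prime_elem_sigma_poly[OF g(1)] aperiodic_sigma_poly[OF g(2)] a] by simp
  also have "\<dots> = multiplicity (sp (j - k) (sp k g)) (sp (j - k) (ap sg a))"
    by (rule multiplicity_sigma_poly[symmetric])
  finally show ?thesis by (simp add: sigma_poly_sigma_poly)
qed

end

subsection \<open>Operator matrices acting on vectors\<close>

lemma sum_shift_reindex:
  fixes g :: "int \<Rightarrow> 'b::comm_monoid_add"
  assumes K: "finite K" and sub: "(\<lambda>j. i + j) ` S \<subseteq> K"
    and z: "\<And>k. k \<in> K \<Longrightarrow> k - i \<notin> S \<Longrightarrow> g k = 0"
  shows "(\<Sum>k\<in>K. g k) = (\<Sum>j\<in>S. g (i + j))"
proof -
  have "(\<Sum>j\<in>S. g (i + j)) = (\<Sum>k\<in>(\<lambda>j. i + j) ` S. g k)"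
    by (subst sum.reindex) (auto simp: inj_on_def)
  also have "\<dots> = (\<Sum>k\<in>K. g k)"
  proof (rule sum.mono_neutral_left[OF K sub], rule ballI)
    fix k assume "k \<in> K - (\<lambda>j. i + j) ` S"
    then have "k \<in> K" "k - i \<notin> S" by (auto simp: image_iff)
    then show "g k = 0" by (rule z)
  qed
  finally show ?thesis by simp
qed

context PiSigma_extension
begin

lemma opmat_apply_eq_sum:
  assumes M: "is_opmat n M" and S: "finite S" "{k. M k \<noteq> 0\<^sub>m n n} \<subseteq> S"
    and v: "v \<in> carrier_vec n"
  shows "opmat_apply sg n M v
    = vec n (\<lambda>r. \<Sum>k\<in>S. \<Sum>c\<in>{0..<n}. M k $$ (r, c) * sigma_pow sg k (v $ c))"
proof (rule eq_vecI)
  fix r assume "r < dim_vec (vec n (\<lambda>r. \<Sum>k\<in>S. \<Sum>c\<in>{0..<n}. M k $$ (r, c) * sigma_pow sg k (v $ c)))"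
  then have r: "r < n" by simp
  have row: "(M k *\<^sub>v map_vec (sigma_pow sg k) v) $ r
      = (\<Sum>c\<in>{0..<n}. M k $$ (r, c) * sigma_pow sg k (v $ c))" for k
  proof -
    have "M k \<in> carrier_mat n n" using M by (simp add: is_opmat_def)
    then show ?thesis using r v by (simp add: scalar_prod_def)
  qed
  have "opmat_apply sg n M v $ r
      = (\<Sum>k\<in>{k. M k \<noteq> 0\<^sub>m n n}. \<Sum>c\<in>{0..<n}. M k $$ (r, c) * sigma_pow sg k (v $ c))"
    using r by (simp add: opmat_apply_def row)
  also have "\<dots> = (\<Sum>k\<in>S. \<Sum>c\<in>{0..<n}. M k $$ (r, c) * sigma_pow sg k (v $ c))"
  proof (rule sum.mono_neutral_left[OF S(1) S(2)], rule ballI)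
    fix k assume "k \<in> S - {k. M k \<noteq> 0\<^sub>m n n}"
    then show "(\<Sum>c\<in>{0..<n}. M k $$ (r, c) * sigma_pow sg k (v $ c)) = 0" using r by simp
  qed
  finally show "opmat_apply sg n M v $ r
      = vec n (\<lambda>r. \<Sum>k\<in>S. \<Sum>c\<in>{0..<n}. M k $$ (r, c) * sigma_pow sg k (v $ c)) $ r"
    using r by simp
qed (simp add: opmat_apply_def)

lemma opmat_mult_entry:
  assumes P: "is_opmat n P" and M: "is_opmat n M" and rc: "r < n" "c < n"
  shows "opmat_mult sg n P M k $$ (r, c)
    = (\<Sum>i\<in>{i. P i \<noteq> 0\<^sub>m n n}. \<Sum>s\<in>{0..<n}. P i $$ (r, s) * sigma_pow sg i (M (k - i) $$ (s, c)))"
proof -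
  have "(P i * map_mat (sigma_pow sg i) (M (k - i))) $$ (r, c)
      = (\<Sum>s\<in>{0..<n}. P i $$ (r, s) * sigma_pow sg i (M (k - i) $$ (s, c)))" for i
  proof -
    have "P i \<in> carrier_mat n n" "M (k - i) \<in> carrier_mat n n"
      using P M by (simp_all add: is_opmat_def)
    then show ?thesis using rc by (auto simp: scalar_prod_def intro!: sum.cong)
  qed
  then show ?thesis using rc by (simp add: opmat_mult_def)
qed

lemma opmat_mult_support:
  assumes P: "is_opmat n P" and M: "is_opmat n M"
  shows "{k. opmat_mult sg n P M k \<noteq> 0\<^sub>m n n}
    \<subseteq> (\<lambda>(i, j). i + j) ` ({k. P k \<noteq> 0\<^sub>m n n} \<times> {k. M k \<noteq> 0\<^sub>m n n})"
proof -
  define SP where "SP = {k. P k \<noteq> 0\<^sub>m n n}"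
  define SM where "SM = {k. M k \<noteq> 0\<^sub>m n n}"
  define K where "K = (\<lambda>(i, j). i + j) ` (SP \<times> SM)"
  let ?PM = "opmat_mult sg n P M"
  have PM_zero: "?PM k = 0\<^sub>m n n" if "k \<notin> K" for k
  proof (rule eq_matI)
    fix r c assume rc: "r < dim_row (0\<^sub>m n n :: 'a ratfun mat)" "c < dim_col (0\<^sub>m n n :: 'a ratfun mat)"
    have "M (k - i) = 0\<^sub>m n n" if "i \<in> SP" for i
    proof -
      have "k - i \<notin> SM"
        using that \<open>k \<notin> K\<close> unfolding K_def by (auto simp: image_iff) (metis add.commute diff_add_cancel)
      then show ?thesis by (simp add: SM_def)
    qed
    then show "?PM k $$ (r, c) = 0\<^sub>m n n $$ (r, c)"
      using rc by (simp add: opmat_mult_entry[OF P M] SP_def sigma_pow_hom)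
  qed (auto simp: opmat_mult_def)
  then have "{k. ?PM k \<noteq> 0\<^sub>m n n} \<subseteq> K" by blast
  then show ?thesis by (simp add: K_def SP_def SM_def)
qed

lemma opmat_apply_mult:
  assumes P: "is_opmat n P" and M: "is_opmat n M" and v: "v \<in> carrier_vec n"
  shows "opmat_apply sg n (opmat_mult sg n P M) v = opmat_apply sg n P (opmat_apply sg n M v)"
proof -
  define SP where "SP = {k. P k \<noteq> 0\<^sub>m n n}"
  define SM where "SM = {k. M k \<noteq> 0\<^sub>m n n}"
  define K where "K = (\<lambda>(i, j). i + j) ` (SP \<times> SM)"
  have fSP: "finite SP" using P by (simp add: is_opmat_def SP_def)
  have fSM: "finite SM" using M by (simp add: is_opmat_def SM_def)
  have fK: "finite K" using fSP fSM by (simp add: K_def)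
  let ?PM = "opmat_mult sg n P M"
  have supp: "{k. ?PM k \<noteq> 0\<^sub>m n n} \<subseteq> K"
    unfolding K_def SP_def SM_def by (rule opmat_mult_support[OF P M])
  have PM: "is_opmat n ?PM"
    unfolding is_opmat_def using supp fK by (auto simp: opmat_mult_def intro: finite_subset)
  define u where "u = opmat_apply sg n M v"
  have u: "u = vec n (\<lambda>s. \<Sum>j\<in>SM. \<Sum>c\<in>{0..<n}. M j $$ (s, c) * sigma_pow sg j (v $ c))"
    unfolding u_def by (rule opmat_apply_eq_sum[OF M fSM _ v]) (simp add: SM_def)
  have uc: "u \<in> carrier_vec n" by (simp add: u)
  have R: "opmat_apply sg n P u
      = vec n (\<lambda>r. \<Sum>i\<in>SP. \<Sum>s\<in>{0..<n}. P i $$ (r, s) * sigma_pow sg i (u $ s))"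
    by (rule opmat_apply_eq_sum[OF P fSP _ uc]) (simp add: SP_def)
  show ?thesis
    unfolding u_def[symmetric] opmat_apply_eq_sum[OF PM fK supp v] R
  proof (rule eq_vecI)
    fix r assume "r < dim_vec (vec n (\<lambda>r. \<Sum>i\<in>SP. \<Sum>s\<in>{0..<n}. P i $$ (r, s) * sigma_pow sg i (u $ s)))"
    then have r: "r < n" by simp
    define X where
      "X i j s c = P i $$ (r, s) * sigma_pow sg i (M j $$ (s, c)) * sigma_pow sg (i + j) (v $ c)"
      for i j s c
    have "(\<Sum>k\<in>K. \<Sum>c\<in>{0..<n}. ?PM k $$ (r, c) * sigma_pow sg k (v $ c))
        = (\<Sum>k\<in>K. \<Sum>c\<in>{0..<n}. \<Sum>i\<in>SP. \<Sum>s\<in>{0..<n}. X i (k - i) s c)"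
      using r by (intro sum.cong refl)
        (simp add: opmat_mult_entry[OF P M] SP_def X_def sum_distrib_right)
    also have "\<dots> = (\<Sum>k\<in>K. \<Sum>i\<in>SP. \<Sum>s\<in>{0..<n}. \<Sum>c\<in>{0..<n}. X i (k - i) s c)"
      by (rule sum.cong[OF refl], rule trans[OF sum.swap], rule sum.cong[OF refl], rule sum.swap)
    also have "\<dots> = (\<Sum>i\<in>SP. \<Sum>k\<in>K. \<Sum>s\<in>{0..<n}. \<Sum>c\<in>{0..<n}. X i (k - i) s c)"
      by (rule sum.swap)
    also have "\<dots> = (\<Sum>i\<in>SP. \<Sum>j\<in>SM. \<Sum>s\<in>{0..<n}. \<Sum>c\<in>{0..<n}. X i j s c)"
    proof (rule sum.cong[OF refl])
      fix i assume i: "i \<in> SP"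
      show "(\<Sum>k\<in>K. \<Sum>s\<in>{0..<n}. \<Sum>c\<in>{0..<n}. X i (k - i) s c)
          = (\<Sum>j\<in>SM. \<Sum>s\<in>{0..<n}. \<Sum>c\<in>{0..<n}. X i j s c)"
      proof (subst sum_shift_reindex[OF fK])
        show "(\<lambda>j. i + j) ` SM \<subseteq> K" using i unfolding K_def by auto
        show "(\<Sum>s\<in>{0..<n}. \<Sum>c\<in>{0..<n}. X i (k - i) s c) = 0" if "k \<in> K" "k - i \<notin> SM" for k
          using that by (simp add: X_def SM_def sigma_pow_hom)
      qed simp
    qed
    also have "\<dots> = (\<Sum>i\<in>SP. \<Sum>s\<in>{0..<n}. P i $$ (r, s) * sigma_pow sg i (u $ s))"
    proof (rule sum.cong[OF refl])
      fix i
      have h: "(\<Sum>s\<in>{0..<n}. P i $$ (r, s) * sigma_pow sg i (u $ s))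
          = (\<Sum>s\<in>{0..<n}. \<Sum>j\<in>SM. \<Sum>c\<in>{0..<n}. X i j s c)"
        by (intro sum.cong refl)
          (simp add: u X_def sigma_pow_hom sigma_pow_add sum_distrib_left mult.assoc)
      then show "(\<Sum>j\<in>SM. \<Sum>s\<in>{0..<n}. \<Sum>c\<in>{0..<n}. X i j s c)
          = (\<Sum>s\<in>{0..<n}. P i $$ (r, s) * sigma_pow sg i (u $ s))"
        by (subst sum.swap) (rule h[symmetric])
    qed
    finally show "vec n (\<lambda>r. \<Sum>k\<in>K. \<Sum>c\<in>{0..<n}. ?PM k $$ (r, c) * sigma_pow sg k (v $ c)) $ r
      = vec n (\<lambda>r. \<Sum>i\<in>SP. \<Sum>s\<in>{0..<n}. P i $$ (r, s) * sigma_pow sg i (u $ s)) $ r"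
      using r by simp
  qed simp
qed

end

subsection \<open>Pole orders\<close>

text \<open>The g-adic valuation of x is at least -e (with x = 0 allowed).\<close>
definition pole_order_le :: "'a::field_gcd poly \<Rightarrow> nat \<Rightarrow> 'a ratfun \<Rightarrow> bool" where
  "pole_order_le g e x \<longleftrightarrow> (\<exists>a c. c \<noteq> 0 \<and> \<not> g dvd c \<and> x = polyK a / polyK (c * g ^ e))"

context
  fixes g :: "'a::field_gcd poly"
  assumes g: "prime_elem g"
begin

lemma pole_order_le_0: "pole_order_le g e 0"
  unfolding pole_order_le_def using g by (intro exI[of _ 0] exI[of _ 1]) (auto simp: prime_elem_def)

lemma pole_order_le_mono:
  assumes "e \<le> e'" "pole_order_le g e x"
  shows "pole_order_le g e' x"
proof -
  obtain a c where ac: "c \<noteq> 0" "\<not> g dvd c" "x = polyK a / polyK (c * g ^ e)"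
    using assms(2) by (auto simp: pole_order_le_def)
  have "g ^ e' = g ^ e * g ^ (e' - e)" using assms(1) by (simp add: power_add[symmetric])
  then have "x = polyK (a * g ^ (e' - e)) / polyK (c * g ^ e')"
    using ac prime_elem_not_zeroI[OF g] by (simp add: field_simps)
  then show ?thesis using ac unfolding pole_order_le_def by blast
qed

lemma pole_order_le_polyK: "pole_order_le g e (polyK a)"
proof -
  have "pole_order_le g 0 (polyK a)"
    unfolding pole_order_le_def using g by (intro exI[of _ a] exI[of _ 1]) (auto simp: prime_elem_def)
  then show ?thesis by (rule pole_order_le_mono[rotated]) simp
qed

lemma pole_order_le_add:
  assumes "pole_order_le g e x" "pole_order_le g e y"
  shows "pole_order_le g e (x + y)"
proof -
  obtain a c where ac: "c \<noteq> 0" "\<not> g dvd c" "x = polyK a / polyK (c * g ^ e)"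
    using assms(1) by (auto simp: pole_order_le_def)
  obtain b d where bd: "d \<noteq> 0" "\<not> g dvd d" "y = polyK b / polyK (d * g ^ e)"
    using assms(2) by (auto simp: pole_order_le_def)
  have "x + y = polyK (a * d + b * c) / polyK ((c * d) * g ^ e)"
    using ac bd prime_elem_not_zeroI[OF g] by (simp add: field_simps)
  moreover have "c * d \<noteq> 0" "\<not> g dvd c * d" using ac bd g by (auto simp: prime_elem_dvd_mult_iff)
  ultimately show ?thesis unfolding pole_order_le_def by blast
qed

lemma pole_order_le_uminus:
  assumes "pole_order_le g e x"
  shows "pole_order_le g e (- x)"
proof -
  obtain a c where ac: "c \<noteq> 0" "\<not> g dvd c" "x = polyK a / polyK (c * g ^ e)"
    using assms by (auto simp: pole_order_le_def)
  then have "- x = polyK (- a) / polyK (c * g ^ e)" by simp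
  then show ?thesis using ac unfolding pole_order_le_def by blast
qed

lemma pole_order_le_diff: "pole_order_le g e x \<Longrightarrow> pole_order_le g e y \<Longrightarrow> pole_order_le g e (x - y)"
  using pole_order_le_add[of e x "- y"] pole_order_le_uminus[of e y] by simp

lemma pole_order_le_mult:
  assumes "pole_order_le g e x" "pole_order_le g e' y"
  shows "pole_order_le g (e + e') (x * y)"
proof -
  obtain a c where ac: "c \<noteq> 0" "\<not> g dvd c" "x = polyK a / polyK (c * g ^ e)"
    using assms(1) by (auto simp: pole_order_le_def)
  obtain b d where bd: "d \<noteq> 0" "\<not> g dvd d" "y = polyK b / polyK (d * g ^ e')"
    using assms(2) by (auto simp: pole_order_le_def)
  have "x * y = polyK (a * b) / polyK ((c * d) * g ^ (e + e'))"
    unfolding ac(3) bd(3) times_divide_times_eq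
    by (simp only: polyK_simps(2)[symmetric]) (simp add: power_add mult_ac)
  moreover have "c * d \<noteq> 0" "\<not> g dvd c * d" using ac bd g by (auto simp: prime_elem_dvd_mult_iff)
  ultimately show ?thesis unfolding pole_order_le_def by blast
qed

lemma pole_order_le_sum: "(\<And>i. i \<in> S \<Longrightarrow> pole_order_le g e (f i)) \<Longrightarrow> pole_order_le g e (sum f S)"
  by (induct S rule: infinite_finite_induct) (simp_all add: pole_order_le_0 pole_order_le_add)

lemma pole_order_le_divide:
  assumes "d \<noteq> 0"
  shows "pole_order_le g (multiplicity g d) (polyK z / polyK d)"
proof -
  have "\<not> is_unit g" using g by (simp add: prime_elem_def)
  then obtain c where c: "d = g ^ multiplicity g d * c" "\<not> g dvd c"
    using multiplicity_decompose'[OF assms] by metis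
  then have "c \<noteq> 0" using assms by auto
  moreover have "polyK z / polyK d = polyK z / polyK (c * g ^ multiplicity g d)"
    using c by (simp add: mult.commute)
  ultimately show ?thesis using c unfolding pole_order_le_def by blast
qed

lemma pole_order_le_divide_dvd:
  assumes "d \<noteq> 0" "m \<noteq> 0" "d dvd m"
  shows "pole_order_le g (multiplicity g m) (polyK z / polyK d)"
proof -
  obtain q where q: "m = d * q" using assms(3) by (auto elim: dvdE)
  then have "q \<noteq> 0" using assms by auto
  then have "polyK z / polyK d = polyK (z * q) / polyK m" using q assms by (simp add: field_simps)
  then show ?thesis using pole_order_le_divide[OF assms(2), of "z * q"] by simp
qed

lemma multiplicity_le_if_pole_order_le:
  fixes z :: "'a poly vec"
  assumes d: "d \<noteq> 0" and red: "Gcd (insert d {z $ i | i. i < n}) = 1"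
    and b: "\<And>i. i < n \<Longrightarrow> pole_order_le g e (polyK (z $ i) / polyK d)"
  shows "multiplicity g d \<le> e"
proof (rule ccontr)
  assume "\<not> multiplicity g d \<le> e"
  then have "Suc e \<le> multiplicity g d" by simp
  then have gd: "g ^ Suc e dvd d" by (rule multiplicity_dvd')
  have "g dvd z $ i" if i: "i < n" for i
  proof -
    obtain a c where ac: "c \<noteq> 0" "\<not> g dvd c"
      "polyK (z $ i) / polyK d = polyK a / polyK (c * g ^ e)"
      using b[OF i] by (auto simp: pole_order_le_def)
    have "z $ i * (c * g ^ e) = a * d"
      using polyK_divide_eq_divideD[OF d _ ac(3)] ac(1) prime_elem_not_zeroI[OF g] by simp
    then have "g ^ e * g dvd (z $ i * c) * g ^ e"
      using gd by (metis dvd_mult mult.commute mult.left_commute power_Suc2)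
    then have "g dvd z $ i * c" using prime_elem_not_zeroI[OF g] by (simp add: mult.commute)
    then show ?thesis using ac(2) g by (simp add: prime_elem_dvd_mult_iff)
  qed
  moreover have "g * g ^ e dvd d" using gd by simp
  then have "g dvd d" by (rule dvd_mult_left)
  ultimately have "g dvd Gcd (insert d {z $ i | i. i < n})" by (auto intro!: Gcd_greatest)
  then have "g dvd 1" by (simp only: red)
  then show False using g by (simp add: prime_elem_def)
qed

end

lemma (in PiSigma_extension) pole_order_le_sigma_pow:
  assumes g: "prime_elem g" and b: "pole_order_le g e x"
  shows "pole_order_le (sp k g) e (sigma_pow sg k x)"
proof -
  obtain a c where ac: "c \<noteq> 0" "\<not> g dvd c" "x = polyK a / polyK (c * g ^ e)"
    using b by (auto simp: pole_order_le_def)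
  have "sigma_pow sg k x = polyK (sp k a) / polyK (sp k c * sp k g ^ e)"
    by (simp only: ac(3) sigma_pow_hom(7) polyK_sigma_poly[symmetric] sigma_poly_hom(1,5))
  moreover have "sp k c \<noteq> 0" "\<not> sp k g dvd sp k c" using ac by (auto simp: sigma_poly_dvd_iff)
  ultimately show ?thesis unfolding pole_order_le_def by blast
qed

lemma common_denom_nonzero:
  assumes B: "B \<in> carrier_mat n n"
  shows "common_denom B \<noteq> 0"
proof -
  have "{snd (quot_of_fract (B $$ (i, j))) | i j. i < dim_row B \<and> j < dim_col B}
      \<subseteq> (\<lambda>(i, j). snd (quot_of_fract (B $$ (i, j)))) ` ({0..<n} \<times> {0..<n})"
    using B by auto
  then have "finite {snd (quot_of_fract (B $$ (i, j))) | i j. i < dim_row B \<and> j < dim_col B}"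
    by (rule finite_subset) auto
  then show ?thesis by (auto simp: common_denom_def Lcm_0_iff)
qed

lemma pole_order_le_entry:
  assumes g: "prime_elem g" and B: "B \<in> carrier_mat n n" and ij: "i < n" "j < n"
  shows "pole_order_le g (multiplicity g (common_denom B)) (B $$ (i, j))"
proof -
  have "snd (quot_of_fract (B $$ (i, j))) dvd common_denom B"
    unfolding common_denom_def using ij B by (intro dvd_Lcm) auto
  moreover have e: "B $$ (i, j)
      = polyK (fst (quot_of_fract (B $$ (i, j)))) / polyK (snd (quot_of_fract (B $$ (i, j))))"
    by (metis Fract_quot_of_fract Fract_conv_to_fract polyK_eq_to_fract)
  ultimately show ?thesis
    by (subst e, intro pole_order_le_divide_dvd[OF g]) (simp_all add: common_denom_nonzero[OF B])
qed

subsection \<open>Solving for one coefficient\<close>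

lemma opmat_of_polys_support:
  assumes "\<forall>i\<le>L. B i \<in> carrier_mat n n"
  shows "is_opmat n (opmat_of_polys n L B)" "{k. opmat_of_polys n L B k \<noteq> 0\<^sub>m n n} \<subseteq> {0..int L}"
proof -
  show sub: "{k. opmat_of_polys n L B k \<noteq> 0\<^sub>m n n} \<subseteq> {0..int L}"
    by (auto simp: opmat_of_polys_def split: if_splits)
  show "is_opmat n (opmat_of_polys n L B)"
    unfolding is_opmat_def using assms finite_subset[OF sub] by (auto simp: opmat_of_polys_def)
qed

context PiSigma_extension
begin

lemma opmat_of_polys_apply_row:
  assumes B_dim: "\<forall>i\<le>L. B i \<in> carrier_mat n n" and y: "y \<in> carrier_vec n" and r: "r < n"
  shows "opmat_apply sg n (opmat_of_polys n L B) y $ r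
    = (\<Sum>k\<in>{0..int L}. \<Sum>c\<in>{0..<n}. polyK (B (nat k) $$ (r, c)) * sigma_pow sg k (y $ c))"
proof -
  have "opmat_apply sg n (opmat_of_polys n L B) y $ r
      = (\<Sum>k\<in>{0..int L}. \<Sum>c\<in>{0..<n}. opmat_of_polys n L B k $$ (r, c) * sigma_pow sg k (y $ c))"
    using opmat_apply_eq_sum[OF opmat_of_polys_support(1)[OF B_dim] _ opmat_of_polys_support(2)[OF B_dim] y] r
    by simp
  also have "\<dots> = (\<Sum>k\<in>{0..int L}. \<Sum>c\<in>{0..<n}. polyK (B (nat k) $$ (r, c)) * sigma_pow sg k (y $ c))"
  proof (intro sum.cong refl)
    fix k c assume k: "k \<in> {0..int L}" and c: "c \<in> {0..<n}"
    then have "B (nat k) \<in> carrier_mat n n" using B_dim by auto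
    then show "opmat_of_polys n L B k $$ (r, c) * sigma_pow sg k (y $ c)
        = polyK (B (nat k) $$ (r, c)) * sigma_pow sg k (y $ c)"
      using k c r by (simp add: opmat_of_polys_def)
  qed
  finally show ?thesis .
qed

text \<open>
  In row r of the system, every term except the j0-th has pole order at most E at g;
  applying the inverse of B j0 then bounds the pole order of \<sigma>^j0(y).
\<close>
lemma pole_order_le_solution_shift:
  fixes z bb :: "'a poly vec" and B :: "nat \<Rightarrow> 'a poly mat"
  assumes B_dim: "\<forall>i\<le>L. B i \<in> carrier_mat n n" and bb: "bb \<in> carrier_vec n" and j0: "j0 \<le> L"
    and Binv: "Binv \<in> carrier_mat n n" "map_mat polyK (B j0) * Binv = 1\<^sub>m n"
    and z: "z \<in> carrier_vec n" and d: "d \<noteq> 0"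
    and sol: "opmat_apply sg n (opmat_of_polys n L B) (map_vec (\<lambda>q. polyK q / polyK d) z)
      = map_vec polyK bb"
    and g: "prime_elem g" and E: "\<And>k. k \<in> {0..int L} - {int j0} \<Longrightarrow> multiplicity g (sp k d) \<le> E"
    and r: "r < n"
  shows "pole_order_le g (multiplicity g (common_denom Binv) + E)
    (sigma_pow sg (int j0) (polyK (z $ r) / polyK d))"
proof -
  define y where "y = map_vec (\<lambda>q. polyK q / polyK d) z"
  define B0 where "B0 = map_mat polyK (B j0)"
  define T where "T s k = (\<Sum>c\<in>{0..<n}. polyK (B (nat k) $$ (s, c)) * sigma_pow sg k (y $ c))" for s k
  define w where "w = map_vec (sigma_pow sg (int j0)) y"
  have yc: "y \<in> carrier_vec n" and wc: "w \<in> carrier_vec n" using z by (simp_all add: y_def w_def)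
  have B0: "B0 \<in> carrier_mat n n" using B_dim j0 by (simp add: B0_def)
  have T_other: "pole_order_le g E (T s k)" if k: "k \<in> {0..int L} - {int j0}" for s k
    unfolding T_def
  proof (rule pole_order_le_sum[OF g])
    fix c assume "c \<in> {0..<n}"
    then have "sigma_pow sg k (y $ c) = polyK (sp k (z $ c)) / polyK (sp k d)"
      using z by (simp add: y_def sigma_pow_hom polyK_sigma_poly)
    then have "pole_order_le g E (sigma_pow sg k (y $ c))"
      using pole_order_le_mono[OF g E[OF k] pole_order_le_divide[OF g, of "sp k d"]] d by simp
    then show "pole_order_le g E (polyK (B (nat k) $$ (s, c)) * sigma_pow sg k (y $ c))"
      using pole_order_le_mult[OF g pole_order_le_polyK[OF g, of 0]] by fastforce
  qed
  have sol_y: "opmat_apply sg n (opmat_of_polys n L B) y = map_vec polyK bb"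
    using sol by (simp add: y_def)
  have T_j0: "pole_order_le g E ((B0 *\<^sub>v w) $ s)" if s: "s < n" for s
  proof -
    have "polyK (bb $ s) = (\<Sum>k\<in>{0..int L}. T s k)"
      using opmat_of_polys_apply_row[OF B_dim yc s] sol_y bb s by (simp add: T_def)
    then have "T s (int j0) = polyK (bb $ s) - (\<Sum>k\<in>{0..int L} - {int j0}. T s k)"
      using sum.remove[of "{0..int L}" "int j0" "T s"] j0 by simp
    moreover have "(B0 *\<^sub>v w) $ s = T s (int j0)"
      using s B0 wc unfolding T_def by (auto simp: B0_def w_def scalar_prod_def intro!: sum.cong)
    moreover have "pole_order_le g E (polyK (bb $ s) - (\<Sum>k\<in>{0..int L} - {int j0}. T s k))"
      by (intro pole_order_le_diff[OF g] pole_order_le_polyK[OF g] pole_order_le_sum[OF g] T_other)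
        auto
    ultimately show ?thesis by simp
  qed
  have "Binv * B0 = 1\<^sub>m n"
    using mat_mult_left_right_inverse[OF B0 Binv(1)] Binv(2) by (simp add: B0_def)
  then have winv: "Binv *\<^sub>v (B0 *\<^sub>v w) = w"
    using assoc_mult_mat_vec[OF Binv(1) B0 wc] wc by simp
  have "(Binv *\<^sub>v (B0 *\<^sub>v w)) $ r = (\<Sum>s\<in>{0..<n}. Binv $$ (r, s) * (B0 *\<^sub>v w) $ s)"
    using r Binv(1) B0 by (simp add: scalar_prod_def)
  moreover have "w $ r = sigma_pow sg (int j0) (polyK (z $ r) / polyK d)"
    using r z by (simp add: w_def y_def)
  ultimately show ?thesis
    unfolding winv using r
    by (auto intro!: pole_order_le_sum[OF g] pole_order_le_mult[OF g]
        pole_order_le_entry[OF g Binv(1)] T_j0)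
qed

lemma solution_multiplicity_recurrence:
  fixes z bb :: "'a poly vec" and B :: "nat \<Rightarrow> 'a poly mat"
  assumes B_dim: "\<forall>i\<le>L. B i \<in> carrier_mat n n" and bb: "bb \<in> carrier_vec n" and j0: "j0 \<le> L"
    and Binv: "Binv \<in> carrier_mat n n" "map_mat polyK (B j0) * Binv = 1\<^sub>m n"
    and z: "z \<in> carrier_vec n" and d: "d \<noteq> 0" and red: "Gcd (insert d {z $ i | i. i < n}) = 1"
    and sol: "opmat_apply sg n (opmat_of_polys n L B) (map_vec (\<lambda>q. polyK q / polyK d) z)
      = map_vec polyK bb"
    and q: "prime_elem q"
  shows "multiplicity (sp k q) d \<le> multiplicity (sp (int j0 + k) q) (common_denom Binv)
    + Max (insert 0 ((\<lambda>i. multiplicity (sp (k + int j0 - i) q) d) ` ({0..int L} - {int j0})))"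
proof -
  define g where "g = sp (int j0 + k) q"
  have g: "prime_elem g" by (simp add: g_def prime_elem_sigma_poly[OF q])
  have shift: "multiplicity g (sp i d) = multiplicity (sp (k + int j0 - i) q) d" for i
    using multiplicity_sigma_poly[of "- i" g "sp i d"]
    by (simp add: g_def sigma_poly_sigma_poly algebra_simps)
  define E where
    "E = Max (insert 0 ((\<lambda>i. multiplicity (sp (k + int j0 - i) q) d) ` ({0..int L} - {int j0})))"
  have E: "multiplicity g (sp i d) \<le> E" if "i \<in> {0..int L} - {int j0}" for i
    unfolding E_def shift using that by (intro Max_ge) auto
  have "pole_order_le (sp (- int j0) g) (multiplicity g (common_denom Binv) + E)
      (polyK (z $ r) / polyK d)" if "r < n" for r
    using pole_order_le_sigma_pow[OF g pole_order_le_solution_shift[OF assms(1-7) sol g E that],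
        where k = "- int j0"]
    by (simp add: sigma_pow_add[symmetric])
  then have "multiplicity (sp (- int j0) g) d \<le> multiplicity g (common_denom Binv) + E"
    by (intro multiplicity_le_if_pole_order_le[OF prime_elem_sigma_poly[OF g] d red]) auto
  then show ?thesis by (simp add: E_def g_def sigma_poly_sigma_poly)
qed

end

subsection \<open>The shift orbit of a prime factor of the denominator\<close>

lemma le_sum_of_upward_recurrence:
  fixes e Mv :: "int \<Rightarrow> nat" and U :: "int \<Rightarrow> int set"
  assumes rec: "\<And>k. e k \<le> Mv k + Max (insert 0 (e ` U k))"
    and U: "\<And>k. finite (U k)" "\<And>k j. j \<in> U k \<Longrightarrow> k < j"
    and top: "\<And>k. K < k \<Longrightarrow> e k = 0"
  shows "e k \<le> (\<Sum>i\<in>{k..K}. Mv i)"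
proof (induct "nat (K - k)" arbitrary: k rule: less_induct)
  case less
  show ?case
  proof (cases "K < k")
    case True
    then show ?thesis using top by simp
  next
    case False
    have "e j \<le> (\<Sum>i\<in>{k + 1..K}. Mv i)" if j: "j \<in> U k" for j
    proof (cases "K < j")
      case True
      then show ?thesis using top by simp
    next
      case False
      then have "e j \<le> (\<Sum>i\<in>{j..K}. Mv i)" using less[of j] U(2)[OF j] by simp
      also have "\<dots> \<le> (\<Sum>i\<in>{k + 1..K}. Mv i)" using U(2)[OF j] by (intro sum_mono2) auto
      finally show ?thesis .
    qed
    then have "Max (insert 0 (e ` U k)) \<le> (\<Sum>i\<in>{k + 1..K}. Mv i)"
      using U(1)[of k] by (simp add: Max_le_iff)
    then have "e k \<le> Mv k + (\<Sum>i\<in>{k + 1..K}. Mv i)" using rec[of k] by linarith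
    also have "\<dots> = (\<Sum>i\<in>{k..K}. Mv i)"
    proof -
      have "{k..K} = insert k {k + 1..K}" using False by auto
      then show ?thesis by simp
    qed
    finally show ?thesis .
  qed
qed

lemma le_sum_of_downward_recurrence:
  fixes e Pv :: "int \<Rightarrow> nat" and U :: "int \<Rightarrow> int set"
  assumes rec: "\<And>k. e k \<le> Pv k + Max (insert 0 (e ` U k))"
    and U: "\<And>k. finite (U k)" "\<And>k j. j \<in> U k \<Longrightarrow> j < k"
    and bottom: "\<And>k. k < K \<Longrightarrow> e k = 0"
  shows "e k \<le> (\<Sum>i\<in>{K..k}. Pv i)"
proof -
  have "(e \<circ> uminus) (- k) \<le> (\<Sum>i\<in>{- k..- K}. (Pv \<circ> uminus) i)"
  proof (rule le_sum_of_upward_recurrence[where e = "e \<circ> uminus" and Mv = "Pv \<circ> uminus"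
        and U = "\<lambda>k. uminus ` U (- k)" and K = "- K" and k = "- k"])
    show "(e \<circ> uminus) k' \<le> (Pv \<circ> uminus) k' + Max (insert 0 ((e \<circ> uminus) ` uminus ` U (- k')))" for k'
      using rec[of "- k'"] by (simp add: image_image)
    show "k' < j" if "j \<in> uminus ` U (- k')" for k' j using that U(2) by force
  qed (use U(1) bottom in auto)
  also have "(\<Sum>i\<in>{- k..- K}. (Pv \<circ> uminus) i) = (\<Sum>i\<in>{K..k}. Pv i)"
    using sum.reindex[of uminus "{- k..- K}" Pv] by (simp add: inj_on_def image_uminus_atLeastAtMost)
  finally show ?thesis by simp
qed

lemma sum_int_atLeastAtMost_0: "0 \<le> K \<Longrightarrow> (\<Sum>i\<in>{0..K}. f i) = (\<Sum>j\<le>nat K. f (int j))"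
  using sum.reindex[of int "{0..nat K}" f] by (simp add: image_int_atLeastAtMost atMost_atLeast0)

lemma sum_int_atLeastAtMost_0_neg: "K \<le> 0 \<Longrightarrow> (\<Sum>i\<in>{K..0}. f i) = (\<Sum>j\<le>nat (- K). f (- int j))"
  using sum.reindex[of uminus "{0..- K}" f] sum_int_atLeastAtMost_0[of "- K" "f \<circ> uminus"]
  by (simp add: inj_on_def image_uminus_atLeastAtMost)

lemma finite_nat_le_ereal: "D \<noteq> \<infinity> \<Longrightarrow> finite {j::nat. ereal (real j) \<le> D}"
proof -
  assume "D \<noteq> \<infinity>"
  then obtain r where r: "D \<le> ereal r" by (cases D) auto
  have "{j::nat. ereal (real j) \<le> D} \<subseteq> {..nat \<lceil>r\<rceil>}"
  proof
    fix j assume "j \<in> {j::nat. ereal (real j) \<le> D}"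
    then have "ereal (real j) \<le> D" by simp
    then have "ereal (real j) \<le> ereal r" using r by (rule order_trans)
    then have "int j \<le> \<lceil>r\<rceil>" by simp linarith
    then show "j \<in> {..nat \<lceil>r\<rceil>}" by simp
  qed
  then show ?thesis by (rule finite_subset) simp
qed

lemma degree_gcd_neq_0_if_prime_elem_dvd:
  fixes a b r :: "'a::field_gcd poly"
  assumes "prime_elem r" "r dvd gcd a b" "a \<noteq> 0"
  shows "degree (gcd a b) \<noteq> 0"
proof -
  have "\<not> is_unit (gcd a b)" using assms(1,2) by (metis dvd_trans prime_elem_def)
  moreover have "gcd a b \<noteq> 0" using assms(3) by simp
  ultimately show ?thesis using is_unit_iff_degree by blast
qed

context PiSigma_extension
begin

lemma finite_shifts_dvd:
  assumes q: "prime_elem q" "aperiodic q" and d: "d \<noteq> 0"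
  shows "finite {k. sp k q dvd d}"
proof -
  let ?S = "{k. sp k q dvd d}"
  let ?f = "\<lambda>k. normalize (sp k q)"
  have "?f ` ?S \<subseteq> prime_factors d"
    using d prime_elem_sigma_poly[OF q(1)] by (auto simp: in_prime_factors_iff)
  then have "finite (?f ` ?S)" by (rule finite_subset) simp
  moreover have "inj_on ?f ?S"
  proof (rule inj_onI)
    fix a b assume "normalize (sp a q) = normalize (sp b q)"
    then have "sp a q dvd normalize (sp b q)" by (metis dvd_refl normalize_dvd_iff)
    then have "q dvd sp (b - a) q" by (simp add: sigma_poly_dvd_shift_iff)
    then have "b - a = 0" by (rule aperiodic_dvd_shift_imp_0[OF q])
    then show "a = b" by simp
  qed
  ultimately show ?thesis by (rule finite_imageD)
qed

lemma ap_dvd_prod_if_multiplicity_le: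
  assumes a: "a \<noteq> 0" and J: "finite J" "\<And>j. j \<in> J \<Longrightarrow> f j \<noteq> 0"
    and le: "\<And>q. prime q \<Longrightarrow> aperiodic q \<Longrightarrow> q dvd a \<Longrightarrow> multiplicity q a \<le> (\<Sum>j\<in>J. multiplicity q (f j))"
  shows "ap sg a dvd (\<Prod>j\<in>J. f j)"
proof (rule multiplicity_le_imp_dvd[OF ap_nonzero[OF a]])
  fix q :: "'a poly" assume q: "prime q"
  show "multiplicity q (ap sg a) \<le> multiplicity q (\<Prod>j\<in>J. f j)"
  proof (cases "q dvd ap sg a")
    case False
    then show ?thesis by (simp add: not_dvd_imp_multiplicity_0)
  next
    case True
    have ap: "aperiodic q" using aperiodic_if_dvd_ap[OF prime_imp_prime_elem[OF q] True a] .
    have "multiplicity q (ap sg a) = multiplicity q a"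
      using multiplicity_ap[OF prime_imp_prime_elem[OF q] ap a] .
    also have "\<dots> \<le> (\<Sum>j\<in>J. multiplicity q (f j))"
      using le[OF q ap] dvd_trans[OF True ap_dvd[OF a]] by simp
    also have "\<dots> = multiplicity q (\<Prod>j\<in>J. f j)"
      using J by (intro prime_elem_multiplicity_prod_distrib[symmetric])
        (auto simp: prime_imp_prime_elem[OF q])
    finally show ?thesis .
  qed
qed

end

text \<open>The recurrences obtained from the leading coefficient of A and the trailing one of P A.\<close>
locale denominator_bounds = PiSigma_extension sg
  for sg :: "'a::{field_char_0,field_gcd} ratfun \<Rightarrow> 'a ratfun" +
  fixes d m p :: "'a poly" and l lt :: nat
  assumes d: "d \<noteq> 0" and m: "m \<noteq> 0" and p: "p \<noteq> 0"
    and head: "\<And>q k. prime_elem q \<Longrightarrow> multiplicity (sigma_poly sg k q) d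
      \<le> multiplicity (sigma_poly sg (int l + k) q) m
        + Max (insert 0 ((\<lambda>i. multiplicity (sigma_poly sg (k + int l - i) q) d) ` ({0..int l} - {int l})))"
    and tail: "\<And>q k. prime_elem q \<Longrightarrow> multiplicity (sigma_poly sg k q) d
      \<le> multiplicity (sigma_poly sg k q) p
        + Max (insert 0 ((\<lambda>i. multiplicity (sigma_poly sg (k - i) q) d) ` ({0..int lt} - {0})))"
begin

abbreviation D where "D \<equiv> disp sg (sp (- int l) (ap sg m)) (ap sg p)"

lemma spread_le_D:
  assumes "k \<in> spread sg (sp (- int l) (ap sg m)) (ap sg p)" "j \<le> k"
  shows "ereal (real j) \<le> D"
proof -
  have "ereal (real k) \<le> D" using assms(1) unfolding disp_def by (intro Sup_upper) auto
  moreover have "ereal (real j) \<le> ereal (real k)" using assms(2) by simp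
  ultimately show ?thesis by (rule order_trans[rotated])
qed

lemma multiplicity_le_sum_head:
  assumes q: "prime_elem q" and top: "\<And>k. sp k q dvd d \<Longrightarrow> k \<le> K"
  shows "multiplicity (sp k q) d \<le> (\<Sum>i\<in>{k..K}. multiplicity (sp (int l + i) q) m)"
proof (rule le_sum_of_upward_recurrence[where e = "\<lambda>k. multiplicity (sp k q) d"
      and U = "\<lambda>k. (\<lambda>i. k + int l - i) ` ({0..int l} - {int l})"])
  show "multiplicity (sp k q) d \<le> multiplicity (sp (int l + k) q) m
      + Max (insert 0 ((\<lambda>k. multiplicity (sp k q) d) ` (\<lambda>i. k + int l - i) ` ({0..int l} - {int l})))"
    for k using head[OF q, of k] by (simp add: image_image)
  show "multiplicity (sp k q) d = 0" if "K < k" for k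
    using top[of k] that by (metis not_dvd_imp_multiplicity_0 not_less)
qed auto

lemma multiplicity_le_sum_tail:
  assumes q: "prime_elem q" and bottom: "\<And>k. sp k q dvd d \<Longrightarrow> K \<le> k"
  shows "multiplicity (sp k q) d \<le> (\<Sum>i\<in>{K..k}. multiplicity (sp i q) p)"
proof (rule le_sum_of_downward_recurrence[where e = "\<lambda>k. multiplicity (sp k q) d"
      and U = "\<lambda>k. (\<lambda>i. k - i) ` ({0..int lt} - {0})"])
  show "multiplicity (sp k q) d \<le> multiplicity (sp k q) p
      + Max (insert 0 ((\<lambda>k. multiplicity (sp k q) d) ` (\<lambda>i. k - i) ` ({0..int lt} - {0})))"
    for k using tail[OF q, of k] by (simp add: image_image)
  show "multiplicity (sp k q) d = 0" if "k < K" for k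
    using bottom[of k] that by (metis not_dvd_imp_multiplicity_0 not_less)
qed auto

lemma highest_shift_dvd:
  assumes q: "prime_elem q" "aperiodic q" and K: "sp K q dvd d" "\<And>k. sp k q dvd d \<Longrightarrow> k \<le> K"
  shows "sp K q dvd sp (- int l) (ap sg m)"
proof -
  have "0 < multiplicity (sp K q) d"
    using K(1) d prime_elem_sigma_poly[OF q(1)] by (simp add: prime_multiplicity_gt_zero_iff)
  also have "\<dots> \<le> multiplicity (sp (int l + K) q) m"
    using multiplicity_le_sum_head[OF q(1) K(2), of K] by simp
  also have "\<dots> = multiplicity (sp K q) (sp (- int l) (ap sg m))"
    using multiplicity_shift_ap[OF q m, of "int l + K" K] by simp
  finally show ?thesis
    using m ap_nonzero prime_elem_sigma_poly[OF q(1)] by (simp add: prime_multiplicity_gt_zero_iff)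
qed

lemma lowest_shift_dvd:
  assumes q: "prime_elem q" "aperiodic q" and K: "sp K q dvd d" "\<And>k. sp k q dvd d \<Longrightarrow> K \<le> k"
  shows "sp K q dvd ap sg p"
proof -
  have "0 < multiplicity (sp K q) d"
    using K(1) d prime_elem_sigma_poly[OF q(1)] by (simp add: prime_multiplicity_gt_zero_iff)
  also have "\<dots> \<le> multiplicity (sp K q) p"
    using multiplicity_le_sum_tail[OF q(1) K(2), of K] by simp
  also have "\<dots> = multiplicity (sp K q) (ap sg p)"
    using multiplicity_shift_ap[OF q p, of K K] by simp
  finally show ?thesis
    using p ap_nonzero prime_elem_sigma_poly[OF q(1)] by (simp add: prime_multiplicity_gt_zero_iff)
qed

lemma shift_orbit:
  assumes q: "prime_elem q" "aperiodic q" "q dvd d"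
  obtains a b :: nat where
    "a + b \<in> spread sg (sp (- int l) (ap sg m)) (ap sg p)"
    "multiplicity q d \<le> (\<Sum>j\<le>a. multiplicity q (sp (- int l - int j) (ap sg m)))"
    "multiplicity q d \<le> (\<Sum>j\<le>b. multiplicity q (sp (int j) (ap sg p)))"
    "\<And>k. sp (int k) q dvd d \<Longrightarrow> k \<le> a"
proof -
  define S where "S = {k. sp k q dvd d}"
  have "0 \<in> S" using q(3) by (simp add: S_def)
  then have S: "finite S" "S \<noteq> {}" using finite_shifts_dvd[OF q(1,2) d] by (auto simp only: S_def)
  define K0 where "K0 = Min S"
  define K1 where "K1 = Max S"
  have top: "sp K1 q dvd d" "\<And>k. sp k q dvd d \<Longrightarrow> k \<le> K1"
    using Max_in[OF S] Max_ge[OF S(1)] by (auto simp: K1_def S_def)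
  have bottom: "sp K0 q dvd d" "\<And>k. sp k q dvd d \<Longrightarrow> K0 \<le> k"
    using Min_in[OF S] Min_le[OF S(1)] by (auto simp: K0_def S_def)
  have K01: "K0 \<le> 0" "0 \<le> K1" using top(2) bottom(2) q(3) by auto
  have "sp K1 q dvd sp (- int l) (ap sg m)" by (rule highest_shift_dvd[OF q(1,2) top])
  moreover have "sp K1 q dvd sp (int (nat (K1 - K0))) (ap sg p)"
    using lowest_shift_dvd[OF q(1,2) bottom] K01
      sigma_poly_dvd_shift_iff[of K1 q "K1 - K0"] sigma_poly_dvd_shift_iff[of K0 q 0] by simp
  ultimately have "sp K1 q dvd gcd (sp (- int l) (ap sg m)) (sp (int (nat (K1 - K0))) (ap sg p))"
    by (rule gcd_greatest)
  then have spread: "nat (K1 - K0) \<in> spread sg (sp (- int l) (ap sg m)) (ap sg p)"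
    unfolding spread_def mem_Collect_eq
    by (rule degree_gcd_neq_0_if_prime_elem_dvd[OF prime_elem_sigma_poly[OF q(1)]]) (simp add: m ap_nonzero)
  have mult_m: "multiplicity (sp (int l + i) q) m = multiplicity q (sp (- int l - i) (ap sg m))" for i
  proof -
    have "0 - (int l + i) = - int l - i" by simp
    then show ?thesis using multiplicity_shift_ap[OF q(1,2) m, of "int l + i" 0] by (simp only: sigma_poly_0)
  qed
  have mult_p: "multiplicity (sp i q) p = multiplicity q (sp (- i) (ap sg p))" for i
    using multiplicity_shift_ap[OF q(1,2) p, of i 0] by simp
  show ?thesis
  proof (rule that[of "nat K1" "nat (- K0)"])
    show "nat K1 + nat (- K0) \<in> spread sg (sp (- int l) (ap sg m)) (ap sg p)"
      using spread K01 by (simp add: nat_add_distrib[symmetric])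
    show "multiplicity q d \<le> (\<Sum>j\<le>nat K1. multiplicity q (sp (- int l - int j) (ap sg m)))"
      using multiplicity_le_sum_head[OF q(1) top(2), of 0]
      by (simp add: mult_m sum_int_atLeastAtMost_0[OF K01(2)])
    show "multiplicity q d \<le> (\<Sum>j\<le>nat (- K0). multiplicity q (sp (int j) (ap sg p)))"
      using multiplicity_le_sum_tail[OF q(1) bottom(2), of 0]
      by (simp add: mult_p sum_int_atLeastAtMost_0_neg[OF K01(1)])
    show "k \<le> nat K1" if "sp (int k) q dvd d" for k
      using top(2)[OF that] by simp
  qed
qed

lemma disp_ap_le: "disp sg (ap sg d) (ap sg d) \<le> D"
proof -
  have "ereal (real k) \<le> D" if k: "k \<in> spread sg (ap sg d) (ap sg d)" for k
  proof -
    let ?G = "gcd (ap sg d) (sp (int k) (ap sg d))"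
    have G: "?G \<noteq> 0" using ap_nonzero[OF d] gcd_eq_0_iff by blast
    have "degree ?G \<noteq> 0" using k unfolding spread_def by blast
    then have "\<not> is_unit ?G" unfolding is_unit_iff_degree[OF G] .
    then obtain r where r: "prime r" "r dvd ?G" by (rule prime_divisorE[OF G])
    define q where "q = sp (- int k) r"
    have q: "prime_elem q" by (simp add: q_def prime_elem_sigma_poly r(1) prime_imp_prime_elem)
    have "q dvd ap sg d"
      using dvd_trans[OF r(2) gcd_dvd2] sigma_poly_dvd_shift_iff[of "- int k" r 0] by (simp add: q_def)
    then have qa: "aperiodic q" "q dvd d"
      using aperiodic_if_dvd_ap[OF q _ d] dvd_trans[OF _ ap_dvd[OF d]] by simp_all
    have "sp (int k) q = r" by (simp add: q_def)
    then have "sp (int k) q dvd d" using dvd_trans[OF dvd_trans[OF r(2) gcd_dvd1] ap_dvd[OF d]] by simp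
    obtain a b where ab: "a + b \<in> spread sg (sp (- int l) (ap sg m)) (ap sg p)"
      "multiplicity q d \<le> (\<Sum>j\<le>a. multiplicity q (sp (- int l - int j) (ap sg m)))"
      "multiplicity q d \<le> (\<Sum>j\<le>b. multiplicity q (sp (int j) (ap sg p)))"
      and a: "\<And>k. sp (int k) q dvd d \<Longrightarrow> k \<le> a"
      by (rule shift_orbit[OF q qa]) (rule that)
    show ?thesis using spread_le_D[OF ab(1)] a[OF \<open>sp (int k) q dvd d\<close>] by simp
  qed
  then show ?thesis unfolding disp_def[of sg "ap sg d" "ap sg d"] by (intro Sup_least) auto
qed

lemma ap_dvd_gcd_prods:
  assumes "D \<noteq> \<infinity>"
  shows "ap sg d dvd gcd (\<Prod>j\<in>{j::nat. ereal (real j) \<le> D}. sp (- int l - int j) (ap sg m))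
                         (\<Prod>j\<in>{j::nat. ereal (real j) \<le> D}. sp (int j) (ap sg p))"
proof -
  let ?J = "{j::nat. ereal (real j) \<le> D}"
  have J: "finite ?J" using assms by (rule finite_nat_le_ereal)
  have sub: "{..a} \<subseteq> ?J" "{..b} \<subseteq> ?J" if "a + b \<in> spread sg (sp (- int l) (ap sg m)) (ap sg p)" for a b
    using spread_le_D[OF that] by auto
  have mult_le:
    "multiplicity q d \<le> (\<Sum>j\<in>?J. multiplicity q (sp (- int l - int j) (ap sg m)))"
    "multiplicity q d \<le> (\<Sum>j\<in>?J. multiplicity q (sp (int j) (ap sg p)))"
    if q: "prime q" "aperiodic q" "q dvd d" for q
  proof -
    obtain a b where ab: "a + b \<in> spread sg (sp (- int l) (ap sg m)) (ap sg p)"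
      "multiplicity q d \<le> (\<Sum>j\<le>a. multiplicity q (sp (- int l - int j) (ap sg m)))"
      "multiplicity q d \<le> (\<Sum>j\<le>b. multiplicity q (sp (int j) (ap sg p)))"
      "\<And>k. sp (int k) q dvd d \<Longrightarrow> k \<le> a"
      by (rule shift_orbit[OF prime_imp_prime_elem[OF q(1)] q(2,3)]) (rule that)
    show "multiplicity q d \<le> (\<Sum>j\<in>?J. multiplicity q (sp (- int l - int j) (ap sg m)))"
      using order_trans[OF ab(2) sum_mono2[OF J sub(1)[OF ab(1)]]] by simp
    show "multiplicity q d \<le> (\<Sum>j\<in>?J. multiplicity q (sp (int j) (ap sg p)))"
      using order_trans[OF ab(3) sum_mono2[OF J sub(2)[OF ab(1)]]] by simp
  qed
  have "ap sg d dvd (\<Prod>j\<in>?J. sp (- int l - int j) (ap sg m))"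
    by (rule ap_dvd_prod_if_multiplicity_le[OF d J _ mult_le(1)]) (simp add: m ap_nonzero)
  moreover have "ap sg d dvd (\<Prod>j\<in>?J. sp (int j) (ap sg p))"
    by (rule ap_dvd_prod_if_multiplicity_le[OF d J _ mult_le(2)]) (simp add: p ap_nonzero)
  ultimately show ?thesis by (rule gcd_greatest)
qed

end

theorem theorem2:
  fixes sg :: "'a::{field_char_0,field_gcd} ratfun \<Rightarrow> 'a ratfun"
    and n l lt :: nat
    and A At :: "nat \<Rightarrow> 'a poly mat"
    and b bt z :: "'a poly vec"
    and d :: "'a poly"
    and P :: "'a opmat"
    and Ainv Atinv :: "'a ratfun mat"
  assumes ext: "PiSigma_ext sg"
    and A_dim: "\<forall>i\<le>l. A i \<in> carrier_mat n n"
    and b_dim: "b \<in> carrier_vec n"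
    and full_reg: "fully_regular sg n l (opmat_of_polys n l A)"
    and P_unimod: "unimodular sg n P"
    and At_dim: "\<forall>i\<le>lt. At i \<in> carrier_mat n n"
    and PA: "opmat_mult sg n P (opmat_of_polys n l A) = opmat_of_polys n lt At"
    and bt_dim: "bt \<in> carrier_vec n"
    and Pb: "opmat_apply sg n P (map_vec polyK b) = map_vec polyK bt"
    and At0: "det (map_mat polyK (At 0)) \<noteq> 0"
    and Ainv: "Ainv \<in> carrier_mat n n" "map_mat polyK (A l) * Ainv = 1\<^sub>m n"
    and Atinv: "Atinv \<in> carrier_mat n n" "map_mat polyK (At 0) * Atinv = 1\<^sub>m n"
    and z_dim: "z \<in> carrier_vec n"
    and d_nz: "d \<noteq> 0"
    and reduced: "Gcd (insert d {z $ i | i. i < n}) = 1"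
    and sol: "opmat_apply sg n (opmat_of_polys n l A)
                (map_vec (\<lambda>q. polyK q / polyK d) z) = map_vec polyK b"
  shows "let m = common_denom Ainv; p = common_denom Atinv;
             D = disp sg (sigma_poly sg (- int l) (ap sg m)) (ap sg p)
         in disp sg (ap sg d) (ap sg d) \<le> D \<and>
            (D \<noteq> \<infinity> \<longrightarrow>
              ap sg d dvd gcd (\<Prod>j\<in>{j::nat. ereal (real j) \<le> D}. sigma_poly sg (- int l - int j) (ap sg m))
                               (\<Prod>j\<in>{j::nat. ereal (real j) \<le> D}. sigma_poly sg (int j) (ap sg p)))"
proof -
  interpret PiSigma_extension sg using ext by (rule PiSigma_extension.intro)
  define y where "y = map_vec (\<lambda>q. polyK q / polyK d) z"
  have "is_opmat n P" using P_unimod by (simp add: unimodular_def)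
  then have "opmat_apply sg n (opmat_of_polys n lt At) y
      = opmat_apply sg n P (opmat_apply sg n (opmat_of_polys n l A) y)"
    unfolding PA[symmetric] using z_dim
    by (intro opmat_apply_mult opmat_of_polys_support(1)[OF A_dim]) (simp_all add: y_def)
  then have sol_t: "opmat_apply sg n (opmat_of_polys n lt At) y = map_vec polyK bt"
    using sol Pb by (simp add: y_def)
  have head: "multiplicity (sp k q) d \<le> multiplicity (sp (int l + k) q) (common_denom Ainv)
      + Max (insert 0 ((\<lambda>i. multiplicity (sp (k + int l - i) q) d) ` ({0..int l} - {int l})))"
    if "prime_elem q" for q k
    by (rule solution_multiplicity_recurrence[OF A_dim b_dim order_refl Ainv z_dim d_nz reduced sol that])
  have tail: "multiplicity (sp k q) d \<le> multiplicity (sp k q) (common_denom Atinv)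
      + Max (insert 0 ((\<lambda>i. multiplicity (sp (k - i) q) d) ` ({0..int lt} - {0})))"
    if "prime_elem q" for q k
    using solution_multiplicity_recurrence[OF At_dim bt_dim le0 Atinv z_dim d_nz reduced
        sol_t[unfolded y_def] that, of k] by simp
  interpret denominator_bounds sg d "common_denom Ainv" "common_denom Atinv" l lt
    by unfold_locales
      (use d_nz common_denom_nonzero[OF Ainv(1)] common_denom_nonzero[OF Atinv(1)] head tail in auto)
  show ?thesis using disp_ap_le ap_dvd_gcd_prods by (simp add: Let_def)
qed

end
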